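(* With notation as in the context, the $*$-homomorphism $\pi\colon\mathcal B\to\mathfrak R=\prod_{W\in\mathcal V}M_{|W|}(K)$, $\pi(b)=(h_Wb)_W$, is injective. Moreover, the ideal $\bigoplus_{W\in\mathcal V}h_W\mathcal B$ is essential in $\mathcal B$ and coincides with the socle of $\mathcal B$: $$\mathrm{soc}(\mathcal B)=\bigoplus_{W\in\mathcal V}\mathcal B\chi_W\mathcal B\cong\bigoplus_{W\in\mathcal V}M_{|W|}(K).$$
   Context: Let $X$ be an infinite, totally disconnected, compact metrizable space, $T$ a homeomorphism of $X$, $\mu$ a full (positive on nonempty open sets), ergodic, $T$-invariant Borel probability measure, $K$ a field with involution, $C_K(X)$ the $*$-algebra of locally constant functions $X\to K$, and $\mathcal A=C_K(X)\rtimes_T\mathbb Z$ the algebraic crossed product (finite sums $\sum f_it^i$, $tf=(f\circ T^{-1})t$, $(ft^i)^*=t^{-i}f^*$). Let $E$ be a nonempty clopen set, $\mathcal P$ a partition of $X\setminus E$ (finite family of nonempty pairwise disjoint clopen sets with union $X\setminus E$), and $\mathcal B$ the unital $*$-subalgebra of $\mathcal A$ generated by $\{\chi_Zt:Z\in\mathcal P\}$. $\mathcal V$ is the set of nonempty sets $W=E\cap T^{-1}(Z_1)\cap\cdots\cap T^{-k+1}(Z_{k-1})\cap T^{-k}(E)$ ($k\ge1$, $Z_i\in\mathcal P$), $|W|=k$. Put $s=\chi_{X\setminus E}t$, $e_{ij}(W)=s^i\chi_W(s^* )^j$ ($0\le i,j\le|W|-1$) and $h_W=\sum_{l=0}^{|W|-1}\chi_{T^l(W)}$;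 $h_W$ is a central projection of $\mathcal B$ and $h_W\mathcal B$ is identified with $M_{|W|}(K)$ (conjugate-transpose involution) via the $*$-isomorphism $e_{ij}(W)\mapsto e_{ij}$. The socle $\mathrm{soc}(\mathcal B)$ is the sum of all minimal one-sided ideals of $\mathcal B$. *)

theory Defs
  imports "HOL-Probability.Probability"
begin

definition totally_disconnected_space :: "'x::topological_space itself \<Rightarrow> bool" where
  "totally_disconnected_space _ \<longleftrightarrow> (\<forall>x::'x. connected_component_set UNIV x = {x})"

definition clopen_set :: "'x::topological_space set \<Rightarrow> bool" where
  "clopen_set S \<longleftrightarrow> open S \<and> closed S"

definition is_homeo :: "('x::topological_space \<Rightarrow> 'x) \<Rightarrow> bool" where
  "is_homeo T \<longleftrightarrow> bij T \<and> continuous_on UNIV T \<and> continuous_on UNIV (inv T)"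

definition tpow :: "('x \<Rightarrow> 'x) \<Rightarrow> int \<Rightarrow> 'x \<Rightarrow> 'x" where
  "tpow T n = (if 0 \<le> n then T ^^ nat n else inv T ^^ nat (- n))"

definition full_measure :: "'x::topological_space measure \<Rightarrow> bool" where
  "full_measure \<mu> \<longleftrightarrow> (\<forall>U. open U \<and> U \<noteq> {} \<longrightarrow> measure \<mu> U > 0)"

definition invariant_measure :: "('x \<Rightarrow> 'x) \<Rightarrow> 'x measure \<Rightarrow> bool" where
  "invariant_measure T \<mu> \<longleftrightarrow> T \<in> \<mu> \<rightarrow>\<^sub>M \<mu> \<and>
     (\<forall>A\<in>sets \<mu>. measure \<mu> (T -` A) = measure \<mu> A)"

definition ergodic_measure :: "('x \<Rightarrow> 'x) \<Rightarrow> 'x measure \<Rightarrow> bool" where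
  "ergodic_measure T \<mu> \<longleftrightarrow>
     (\<forall>A\<in>sets \<mu>. T -` A = A \<longrightarrow> measure \<mu> A = 0 \<or> measure \<mu> A = 1)"

definition field_involution :: "('k::field \<Rightarrow> 'k) \<Rightarrow> bool" where
  "field_involution \<sigma> \<longleftrightarrow> (\<forall>a b. \<sigma> (a + b) = \<sigma> a + \<sigma> b) \<and>
     (\<forall>a b. \<sigma> (a * b) = \<sigma> a * \<sigma> b) \<and> (\<forall>a. \<sigma> (\<sigma> a) = a)"

text \<open>An element \<open>\<Sum> f_i t^i\<close> is represented by its coefficient function
  \<open>a :: int \<Rightarrow> 'x \<Rightarrow> 'k\<close>, \<open>a i = f_i\<close>.\<close>

type_synonym ('x, 'k) cp = "int \<Rightarrow> 'x \<Rightarrow> 'k"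

definition locally_constant :: "('x::topological_space \<Rightarrow> 'k) \<Rightarrow> bool" where
  "locally_constant f \<longleftrightarrow> (\<forall>x. \<exists>U. open U \<and> x \<in> U \<and> (\<forall>y\<in>U. f y = f x))"

definition cp_carrier :: "('x::topological_space, 'k::zero) cp set" where
  "cp_carrier = {a. finite {i. a i \<noteq> (\<lambda>_. 0)} \<and> (\<forall>i. locally_constant (a i))}"

definition cp_zero :: "('x, 'k::zero) cp" where
  "cp_zero = (\<lambda>_ _. 0)"

definition cp_one :: "('x, 'k::{zero,one}) cp" where
  "cp_one = (\<lambda>n _. if n = 0 then 1 else 0)"

definition cp_add :: "('x, 'k::plus) cp \<Rightarrow> ('x, 'k) cp \<Rightarrow> ('x, 'k) cp" where
  "cp_add a b = (\<lambda>n x. a n x + b n x)"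

definition cp_smult :: "'k::times \<Rightarrow> ('x, 'k) cp \<Rightarrow> ('x, 'k) cp" where
  "cp_smult c a = (\<lambda>n x. c * a n x)"

text \<open>\<open>(f t^i)(g t^j) = f (g \<circ> T^{-i}) t^{i+j}\<close>.\<close>
definition cp_mult :: "('x \<Rightarrow> 'x) \<Rightarrow> ('x, 'k::comm_ring_1) cp \<Rightarrow> ('x, 'k) cp \<Rightarrow> ('x, 'k) cp" where
  "cp_mult T a b = (\<lambda>n x. \<Sum>i\<in>{i. a i \<noteq> (\<lambda>_. 0)}. a i x * b (n - i) (tpow T (- i) x))"

text \<open>\<open>(f t^i)^* = t^{-i} f^* = (f^* \<circ> T^i) t^{-i}\<close>.\<close>
definition cp_star :: "('k \<Rightarrow> 'k) \<Rightarrow> ('x \<Rightarrow> 'x) \<Rightarrow> ('x, 'k) cp \<Rightarrow> ('x, 'k) cp" where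
  "cp_star \<sigma> T a = (\<lambda>n x. \<sigma> (a (- n) (tpow T (- n) x)))"

definition cp_chi :: "'x set \<Rightarrow> ('x, 'k::{zero,one}) cp" where
  "cp_chi Z = (\<lambda>n x. if n = 0 \<and> x \<in> Z then 1 else 0)"

definition cp_chit :: "'x set \<Rightarrow> ('x, 'k::{zero,one}) cp" where
  "cp_chit Z = (\<lambda>n x. if n = 1 \<and> x \<in> Z then 1 else 0)"

fun cp_pow :: "('x \<Rightarrow> 'x) \<Rightarrow> ('x, 'k::comm_ring_1) cp \<Rightarrow> nat \<Rightarrow> ('x, 'k) cp" where
  "cp_pow T a 0 = cp_one"
| "cp_pow T a (Suc n) = cp_mult T a (cp_pow T a n)"

definition is_partition :: "'x::topological_space set set \<Rightarrow> 'x set \<Rightarrow> bool" where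
  "is_partition P S \<longleftrightarrow> finite P \<and> (\<forall>Z\<in>P. Z \<noteq> {} \<and> clopen_set Z) \<and>
     (\<forall>Z1\<in>P. \<forall>Z2\<in>P. Z1 \<noteq> Z2 \<longrightarrow> Z1 \<inter> Z2 = {}) \<and> \<Union>P = S"

inductive_set subalgB :: "('k::comm_ring_1 \<Rightarrow> 'k) \<Rightarrow> ('x \<Rightarrow> 'x) \<Rightarrow> 'x set set \<Rightarrow> ('x, 'k) cp set"
  for \<sigma> T P where
  gen: "Z \<in> P \<Longrightarrow> cp_chit Z \<in> subalgB \<sigma> T P"
| one: "cp_one \<in> subalgB \<sigma> T P"
| add: "a \<in> subalgB \<sigma> T P \<Longrightarrow> b \<in> subalgB \<sigma> T P \<Longrightarrow> cp_add a b \<in> subalgB \<sigma> T P"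
| smult: "a \<in> subalgB \<sigma> T P \<Longrightarrow> cp_smult c a \<in> subalgB \<sigma> T P"
| mult: "a \<in> subalgB \<sigma> T P \<Longrightarrow> b \<in> subalgB \<sigma> T P \<Longrightarrow> cp_mult T a b \<in> subalgB \<sigma> T P"
| star: "a \<in> subalgB \<sigma> T P \<Longrightarrow> cp_star \<sigma> T a \<in> subalgB \<sigma> T P"

text \<open>\<open>W(Zs) = E \<inter> T^{-1}(Z_1) \<inter> \<dots> \<inter> T^{-k+1}(Z_{k-1}) \<inter> T^{-k}(E)\<close> where
  \<open>Zs = [Z_1,\<dots>,Z_{k-1}]\<close> and \<open>k = length Zs + 1\<close>.\<close>
definition Wset :: "('x \<Rightarrow> 'x) \<Rightarrow> 'x set \<Rightarrow> 'x set list \<Rightarrow> 'x set" where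
  "Wset T E Zs = {x. x \<in> E \<and> (\<forall>i<length Zs. (T ^^ Suc i) x \<in> Zs ! i) \<and>
                      (T ^^ Suc (length Zs)) x \<in> E}"

definition Vsets :: "('x \<Rightarrow> 'x) \<Rightarrow> 'x set \<Rightarrow> 'x set set \<Rightarrow> 'x set set" where
  "Vsets T E P = {W. W \<noteq> {} \<and> (\<exists>Zs. set Zs \<subseteq> P \<and> W = Wset T E Zs)}"

definition Wlen :: "('x \<Rightarrow> 'x) \<Rightarrow> 'x set \<Rightarrow> 'x set set \<Rightarrow> 'x set \<Rightarrow> nat" where
  "Wlen T E P W = (LEAST k. \<exists>Zs. set Zs \<subseteq> P \<and> W = Wset T E Zs \<and> k = Suc (length Zs))"

definition hW :: "('x \<Rightarrow> 'x) \<Rightarrow> 'x set \<Rightarrow> 'x set set \<Rightarrow> 'x set \<Rightarrow> ('x, 'k::{comm_ring_1}) cp" where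
  "hW T E P W = (\<lambda>n x. \<Sum>l<Wlen T E P W. cp_chi ((T ^^ l) ` W) n x)"

inductive_set add_closure :: "('x, 'k::comm_ring_1) cp set \<Rightarrow> ('x, 'k) cp set" for S where
  zero: "cp_zero \<in> add_closure S"
| step: "a \<in> add_closure S \<Longrightarrow> s \<in> S \<Longrightarrow> cp_add a s \<in> add_closure S"

definition add_subgroup :: "('x, 'k::comm_ring_1) cp set \<Rightarrow> bool" where
  "add_subgroup I \<longleftrightarrow> cp_zero \<in> I \<and> (\<forall>a\<in>I. \<forall>b\<in>I. cp_add a b \<in> I) \<and>
     (\<forall>a\<in>I. cp_smult (-1) a \<in> I)"

definition left_ideal :: "('x \<Rightarrow> 'x) \<Rightarrow> ('x, 'k::comm_ring_1) cp set \<Rightarrow> ('x, 'k) cp set \<Rightarrow> bool" where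
  "left_ideal T R I \<longleftrightarrow> I \<subseteq> R \<and> add_subgroup I \<and> (\<forall>r\<in>R. \<forall>a\<in>I. cp_mult T r a \<in> I)"

definition right_ideal :: "('x \<Rightarrow> 'x) \<Rightarrow> ('x, 'k::comm_ring_1) cp set \<Rightarrow> ('x, 'k) cp set \<Rightarrow> bool" where
  "right_ideal T R I \<longleftrightarrow> I \<subseteq> R \<and> add_subgroup I \<and> (\<forall>r\<in>R. \<forall>a\<in>I. cp_mult T a r \<in> I)"

definition two_sided_ideal :: "('x \<Rightarrow> 'x) \<Rightarrow> ('x, 'k::comm_ring_1) cp set \<Rightarrow> ('x, 'k) cp set \<Rightarrow> bool" where
  "two_sided_ideal T R I \<longleftrightarrow> left_ideal T R I \<and> right_ideal T R I"

definition minimal_left_ideal :: "('x \<Rightarrow> 'x) \<Rightarrow> ('x, 'k::comm_ring_1) cp set \<Rightarrow> ('x, 'k) cp set \<Rightarrow> bool" where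
  "minimal_left_ideal T R I \<longleftrightarrow> left_ideal T R I \<and> I \<noteq> {cp_zero} \<and>
     (\<forall>J. left_ideal T R J \<and> J \<subseteq> I \<longrightarrow> J = {cp_zero} \<or> J = I)"

definition minimal_right_ideal :: "('x \<Rightarrow> 'x) \<Rightarrow> ('x, 'k::comm_ring_1) cp set \<Rightarrow> ('x, 'k) cp set \<Rightarrow> bool" where
  "minimal_right_ideal T R I \<longleftrightarrow> right_ideal T R I \<and> I \<noteq> {cp_zero} \<and>
     (\<forall>J. right_ideal T R J \<and> J \<subseteq> I \<longrightarrow> J = {cp_zero} \<or> J = I)"

definition socle :: "('x \<Rightarrow> 'x) \<Rightarrow> ('x, 'k::comm_ring_1) cp set \<Rightarrow> ('x, 'k) cp set" where
  "socle T R = add_closure (\<Union>{I. minimal_left_ideal T R I \<or> minimal_right_ideal T R I})"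

definition essential_ideal :: "('x \<Rightarrow> 'x) \<Rightarrow> ('x, 'k::comm_ring_1) cp set \<Rightarrow> ('x, 'k) cp set \<Rightarrow> bool" where
  "essential_ideal T R I \<longleftrightarrow> two_sided_ideal T R I \<and>
     (\<forall>J. two_sided_ideal T R J \<and> J \<noteq> {cp_zero} \<longrightarrow> I \<inter> J \<noteq> {cp_zero})"

end

theory Submission
  imports Defs
begin

text \<open>Every \<open>W \<in> \<V>\<close> is the base of a tower \<open>D\<^sub>W = \<Union>\<^bsub>l<|W|\<^esub> T\<^sup>l W\<close>: the points of \<open>W\<close> return to \<open>E\<close>
  after exactly \<open>|W|\<close> steps and pass through the same blocks of \<open>P\<close> on the way. By induction over the
  generators, every \<open>b \<in> B\<close>, read as a matrix indexed by the levels of \<open>D\<^sub>W\<close>, has scalar entries and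
  none leaving the tower. Hence \<open>h\<^sub>W = \<chi>\<^bsub>D\<^sub>W\<^esub>\<close> is central and \<open>h\<^sub>W B\<close> is spanned by the matrix units
  \<open>e\<^sub>m\<^sub>l(W) = \<chi>\<^bsub>T\<^sup>m W\<^esub> t\<^sup>m\<^sup>-\<^sup>l \<in> B\<close>; its rows \<open>\<chi>\<^bsub>T\<^sup>l W\<^esub> B\<close> are minimal right ideals, so
  \<open>\<Oplus>\<^sub>W h\<^sub>W B \<subseteq> soc(B)\<close>, and the sum is direct because distinct towers are disjoint.

  Conversely, by ergodicity and invariance of \<open>\<mu>\<close>, almost every point returns to \<open>E\<close> and has visited
  \<open>E\<close>, so it lies in some tower; as \<open>\<mu>\<close> is full, the towers are dense. Coefficients of elements of \<open>B\<close>
  are locally constant, so \<open>b\<close> is determined by the family \<open>h\<^sub>W b\<close>. Thus every nonzero one-sided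
  ideal meets \<open>\<Oplus>\<^sub>W h\<^sub>W B\<close>, which gives essentiality and, by minimality, \<open>soc(B) \<subseteq> \<Oplus>\<^sub>W h\<^sub>W B\<close>.\<close>

lemma tpow_int: "tpow T (int n) = T ^^ n"
  by (simp add: tpow_def)

lemma tpow_minus_int: "tpow T (- int n) = inv T ^^ n"
  by (auto simp: tpow_def)

lemma tpow_zero [simp]: "tpow T 0 = id"
  by (simp add: tpow_def)

lemma tpow_one: "tpow T 1 = T"
  using tpow_int [of T 1] by simp

lemma tpow_minus_one: "tpow T (- 1) = inv T"
  using tpow_minus_int [of T 1] by simp

lemma tpow_add_one:
  assumes "bij T"
  shows "tpow T (n + 1) x = T (tpow T n x)"
proof (cases "0 \<le> n")
  case True
  then have "nat (n + 1) = Suc (nat n)" by simp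
  with True show ?thesis by (simp add: tpow_def)
next
  case False
  then obtain m where "nat (- n) = Suc m"
    using gr0_conv_Suc [of "nat (- n)"] by auto
  then have m: "n = - int (Suc m)"
    using False by simp
  have "tpow T n x = inv T ((inv T ^^ m) x)"
    using tpow_minus_int [of T "Suc m"] by (simp add: m)
  moreover have "tpow T (n + 1) x = (inv T ^^ m) x"
    using tpow_minus_int [of T m] by (simp add: m)
  ultimately show ?thesis
    using assms by (simp add: bij_is_surj surj_f_inv_f)
qed

lemma tpow_diff_one:
  assumes "bij T"
  shows "tpow T (n - 1) x = inv T (tpow T n x)"
  using tpow_add_one [OF assms, of "n - 1" x] assms by (simp add: bij_is_inj)

lemma tpow_add:
  assumes "bij T"
  shows "tpow T a (tpow T b x) = tpow T (a + b) x"
proof (induction a rule: int_induct [where k = 0])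
  case (step1 i)
  have "tpow T (i + 1) (tpow T b x) = T (tpow T (i + b) x)"
    using step1.IH by (simp add: tpow_add_one [OF assms])
  also have "\<dots> = tpow T (i + 1 + b) x"
    using tpow_add_one [OF assms, of "i + b" x] by (simp add: ac_simps)
  finally show ?case .
next
  case (step2 i)
  then show ?case
    using tpow_diff_one [OF assms] by (metis add.commute add_diff_eq)
qed simp

lemma tpow_funpow:
  assumes "bij T" and "0 \<le> n + int j"
  shows "tpow T n ((T ^^ j) w) = (T ^^ nat (n + int j)) w"
proof -
  obtain m :: nat where m: "n + int j = int m"
    using assms(2) by (metis nonneg_eq_int)
  have "tpow T n ((T ^^ j) w) = tpow T (n + int j) w"
    by (simp add: tpow_add [OF assms(1)] flip: tpow_int)
  also have "\<dots> = (T ^^ m) w"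
    by (simp only: m tpow_int)
  finally show ?thesis
    using m by simp
qed

lemma funpow_inv_funpow:
  assumes "bij T"
  shows "(T ^^ j) ((inv T ^^ a) x) = (if j \<le> a then (inv T ^^ (a - j)) x else (T ^^ (j - a)) x)"
proof -
  have eq: "(T ^^ j) ((inv T ^^ a) x) = tpow T (int j - int a) x"
    using tpow_add [OF assms, of "int j" "- int a" x] by (simp add: tpow_int tpow_minus_int)
  show ?thesis
  proof (cases "j \<le> a")
    case True
    then have "int j - int a = - int (a - j)"
      by simp
    then show ?thesis
      using True by (simp only: eq tpow_minus_int if_True)
  next
    case False
    then have "int j - int a = int (j - a)"
      by simp
    then show ?thesis
      using False by (simp only: eq tpow_int if_False)
  qed
qed

lemma continuous_on_funpow:
  fixes f :: "'a::topological_space \<Rightarrow> 'a"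
  shows "continuous_on UNIV f \<Longrightarrow> continuous_on UNIV (f ^^ n)"
  by (induction n) (simp add: continuous_on_id, simp, metis continuous_on_compose2 subset_UNIV)

lemma continuous_on_tpow:
  assumes "continuous_on UNIV T" "continuous_on UNIV (inv T)"
  shows "continuous_on UNIV (tpow T n)"
  using assms by (simp add: tpow_def continuous_on_funpow)

definition cp_monom :: "('x \<Rightarrow> 'k::zero) \<Rightarrow> int \<Rightarrow> ('x, 'k) cp" where
  "cp_monom f m = (\<lambda>n x. if n = m then f x else 0)"

definition cp_supp :: "('x, 'k::zero) cp \<Rightarrow> int set" where
  "cp_supp a = {i. a i \<noteq> (\<lambda>_. 0)}"

lemma cp_mult_eq_sum:
  assumes "finite S" "cp_supp a \<subseteq> S"
  shows "cp_mult T a b n x = (\<Sum>i\<in>S. a i x * b (n - i) (tpow T (- i) x))"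
  unfolding cp_mult_def
  by (rule sum.mono_neutral_left [OF assms(1) assms(2) [unfolded cp_supp_def]]) auto

lemma cp_mult_nonzero_term:
  assumes "cp_mult T a b n x \<noteq> 0"
  obtains i where "a i x \<noteq> 0" and "b (n - i) (tpow T (- i) x) \<noteq> 0"
proof -
  obtain i where "a i x * b (n - i) (tpow T (- i) x) \<noteq> 0"
    using assms unfolding cp_mult_def by (rule sum.not_neutral_contains_not_neutral)
  then show ?thesis
    using that mult_not_zero by blast
qed

lemma cp_supp_monom: "cp_supp (cp_monom f m) \<subseteq> {m}"
  by (auto simp: cp_supp_def cp_monom_def)

lemma cp_mult_monom_left:
  "cp_mult T (cp_monom f i) c n x = f x * c (n - i) (tpow T (- i) x)"
  by (subst cp_mult_eq_sum [of "{i}", OF _ cp_supp_monom]) (auto simp: cp_monom_def)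

lemma cp_mult_monom_right:
  assumes "finite (cp_supp a)"
  shows "cp_mult T a (cp_monom g j) n x = a (n - j) x * g (tpow T (- (n - j)) x)"
proof -
  have "cp_mult T a (cp_monom g j) n x =
      (\<Sum>i\<in>cp_supp a \<union> {n - j}. a i x * cp_monom g j (n - i) (tpow T (- i) x))"
    using assms by (intro cp_mult_eq_sum) auto
  also have "\<dots> = (\<Sum>i\<in>cp_supp a \<union> {n - j}. if i = n - j then a i x * g (tpow T (- i) x) else 0)"
    by (intro sum.cong) (auto simp: cp_monom_def)
  also have "\<dots> = a (n - j) x * g (tpow T (- (n - j)) x)"
    using assms by (subst sum.delta) auto
  finally show ?thesis .
qed

lemma cp_mult_monom:
  "cp_mult T (cp_monom f i) (cp_monom g j) = cp_monom (\<lambda>x. f x * g (tpow T (- i) x)) (i + j)"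
  unfolding fun_eq_iff cp_mult_monom_left by (auto simp: cp_monom_def)

lemma cp_star_monom:
  assumes "\<sigma> 0 = 0"
  shows "cp_star \<sigma> T (cp_monom f i) = cp_monom (\<lambda>x. \<sigma> (f (tpow T i x))) (- i)"
  using assms by (auto simp: cp_star_def cp_monom_def fun_eq_iff)

lemma cp_chi_eq_monom: "cp_chi Z = cp_monom (indicator Z) 0"
  by (auto simp: cp_chi_def cp_monom_def fun_eq_iff)

lemma cp_chit_eq_monom: "cp_chit Z = cp_monom (indicator Z) 1"
  by (auto simp: cp_chit_def cp_monom_def fun_eq_iff)

lemma cp_one_eq_monom: "cp_one = cp_monom (\<lambda>_. 1) 0"
  by (auto simp: cp_one_def cp_monom_def fun_eq_iff)

lemma cp_monom_cong: "(\<And>x. f x = g x) \<Longrightarrow> cp_monom f m = cp_monom g m"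
  by (simp add: cp_monom_def fun_eq_iff)

lemma cp_zero_eq_monom: "cp_zero = cp_monom (\<lambda>_. 0) m"
  by (auto simp: cp_zero_def cp_monom_def fun_eq_iff)

lemma cp_smult_monom:
  "cp_smult c (cp_monom f m) = (cp_monom (\<lambda>x. c * f x) m :: ('x, 'k::mult_zero) cp)"
  by (auto simp: cp_smult_def cp_monom_def fun_eq_iff)

lemma cp_add_monom:
  "cp_add (cp_monom f m) (cp_monom g m) = (cp_monom (\<lambda>x. f x + g x) m :: ('x, 'k::monoid_add) cp)"
  by (auto simp: cp_add_def cp_monom_def fun_eq_iff)

lemma cp_mult_zero_left: "cp_mult T cp_zero b = cp_zero"
  by (simp add: cp_mult_def cp_zero_def fun_eq_iff)

lemma cp_mult_zero_right: "cp_mult T a cp_zero = cp_zero"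
  by (simp add: cp_mult_def cp_zero_def fun_eq_iff)

lemma cp_mult_add_right: "cp_mult T a (cp_add b c) = cp_add (cp_mult T a b) (cp_mult T a c)"
  by (simp add: cp_mult_def cp_add_def fun_eq_iff distrib_left sum.distrib)

lemma cp_mult_smult_right: "cp_mult T a (cp_smult c b) = cp_smult c (cp_mult T a b)"
  by (simp add: cp_mult_def cp_smult_def fun_eq_iff sum_distrib_left algebra_simps)

lemma cp_mult_add_left:
  assumes "finite (cp_supp a)" "finite (cp_supp b)"
  shows "cp_mult T (cp_add a b) c = cp_add (cp_mult T a c) (cp_mult T b c)"
proof (intro ext)
  fix n x
  let ?S = "cp_supp a \<union> cp_supp b"
  let ?t = "\<lambda>d i. d i x * c (n - i) (tpow T (- i) x)"
  have "cp_supp (cp_add a b) \<subseteq> ?S"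
    by (auto simp: cp_supp_def cp_add_def fun_eq_iff)
  then have "cp_mult T (cp_add a b) c n x = (\<Sum>i\<in>?S. ?t (cp_add a b) i)"
    using assms by (intro cp_mult_eq_sum) auto
  also have "\<dots> = (\<Sum>i\<in>?S. ?t a i) + (\<Sum>i\<in>?S. ?t b i)"
    by (simp add: cp_add_def sum.distrib [symmetric] distrib_right)
  also have "\<dots> = cp_mult T a c n x + cp_mult T b c n x"
    using assms by (subst (1 2) cp_mult_eq_sum [of ?S]) auto
  finally show "cp_mult T (cp_add a b) c n x = cp_add (cp_mult T a c) (cp_mult T b c) n x"
    by (simp add: cp_add_def)
qed

lemma cp_mult_monom_zero_assoc:
  assumes "finite (cp_supp b)"
  shows "cp_mult T (cp_mult T (cp_monom f 0) b) r = cp_mult T (cp_monom f 0) (cp_mult T b r)"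
proof (intro ext)
  fix n x
  have "cp_supp (cp_mult T (cp_monom f 0) b) \<subseteq> cp_supp b"
    by (auto simp: cp_supp_def cp_mult_monom_left fun_eq_iff) (metis mult_zero_right)
  then have "cp_mult T (cp_mult T (cp_monom f 0) b) r n x =
      (\<Sum>i\<in>cp_supp b. f x * b i x * r (n - i) (tpow T (- i) x))"
    using assms by (subst cp_mult_eq_sum [of "cp_supp b"]) (simp_all add: cp_mult_monom_left)
  also have "\<dots> = f x * cp_mult T b r n x"
    using assms by (subst cp_mult_eq_sum [of "cp_supp b" b]) (simp_all add: sum_distrib_left mult.assoc)
  finally show "cp_mult T (cp_mult T (cp_monom f 0) b) r n x = cp_mult T (cp_monom f 0) (cp_mult T b r) n x"
    by (simp add: cp_mult_monom_left)
qed

lemma locally_constant_const: "locally_constant (\<lambda>_. c)"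
  unfolding locally_constant_def by (intro allI exI [of _ UNIV]) auto

lemma locally_constant_indicator:
  assumes "clopen_set A"
  shows "locally_constant (indicator A)"
  unfolding locally_constant_def
proof
  fix x
  show "\<exists>U. open U \<and> x \<in> U \<and> (\<forall>y\<in>U. indicator A y = indicator A x)"
  proof (cases "x \<in> A")
    case True
    then show ?thesis
      using assms by (intro exI [of _ A]) (simp add: clopen_set_def)
  next
    case False
    then show ?thesis
      using assms by (intro exI [of _ "- A"]) (auto simp: clopen_set_def open_Compl)
  qed
qed

lemma locally_constant_binop:
  assumes "locally_constant f" and "locally_constant g"
  shows "locally_constant (\<lambda>x. h (f x) (g x))"
  unfolding locally_constant_def
proof
  fix x
  obtain U where U: "open U" "x \<in> U" "\<forall>y\<in>U. f y = f x"
    using assms(1) unfolding locally_constant_def by blast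
  obtain U' where U': "open U'" "x \<in> U'" "\<forall>y\<in>U'. g y = g x"
    using assms(2) unfolding locally_constant_def by blast
  have "\<forall>y\<in>U \<inter> U'. h (f y) (g y) = h (f x) (g x)"
    using U(3) U'(3) by simp
  then show "\<exists>U. open U \<and> x \<in> U \<and> (\<forall>y\<in>U. h (f y) (g y) = h (f x) (g x))"
    using U U' by blast
qed

lemma locally_constant_comp:
  assumes "locally_constant f" and "continuous_on UNIV g"
  shows "locally_constant (\<lambda>x. f (g x))"
  unfolding locally_constant_def
proof
  fix x
  obtain U where U: "open U" "g x \<in> U" "\<forall>y\<in>U. f y = f (g x)"
    using assms(1) unfolding locally_constant_def by blast
  have "open (g -` U)"
    using U(1) assms(2) by (rule open_vimage)
  then show "\<exists>U. open U \<and> x \<in> U \<and> (\<forall>y\<in>U. f (g y) = f (g x))"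
    using U(2,3) by blast
qed

lemma locally_constant_sum:
  assumes "finite S" "\<And>i. i \<in> S \<Longrightarrow> locally_constant (f i)"
  shows "locally_constant (\<lambda>x. \<Sum>i\<in>S. f i x)"
  using assms
proof (induction S rule: finite_induct)
  case (insert a F)
  then show ?case
    using locally_constant_binop [of "f a" "\<lambda>x. \<Sum>i\<in>F. f i x" "(+)"] by simp
qed (simp add: locally_constant_const)

lemma cp_carrier_iff: "a \<in> cp_carrier \<longleftrightarrow> finite (cp_supp a) \<and> (\<forall>i. locally_constant (a i))"
  by (simp add: cp_carrier_def cp_supp_def)

lemma cp_supp_mult:
  "cp_supp (cp_mult T a b) \<subseteq> (\<lambda>(i, j). i + j) ` (cp_supp a \<times> cp_supp b)"
proof
  fix n
  assume "n \<in> cp_supp (cp_mult T a b)"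
  then obtain x where "cp_mult T a b n x \<noteq> 0"
    by (auto simp: cp_supp_def)
  then obtain i where "a i x \<noteq> 0" "b (n - i) (tpow T (- i) x) \<noteq> 0"
    by (rule cp_mult_nonzero_term)
  then have "i \<in> cp_supp a" "n - i \<in> cp_supp b"
    by (auto simp: cp_supp_def fun_eq_iff)
  then show "n \<in> (\<lambda>(i, j). i + j) ` (cp_supp a \<times> cp_supp b)"
    by (intro image_eqI [of _ _ "(i, n - i)"]) auto
qed

lemma cp_carrier_mult:
  assumes cont: "continuous_on UNIV T" "continuous_on UNIV (inv T)"
    and a: "a \<in> cp_carrier" and b: "b \<in> cp_carrier"
  shows "cp_mult T a b \<in> cp_carrier"
proof -
  have fa: "finite (cp_supp a)" and fb: "finite (cp_supp b)"
    using a b by (auto simp: cp_carrier_iff)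
  have "finite (cp_supp (cp_mult T a b))"
    by (rule finite_subset [OF cp_supp_mult]) (simp add: fa fb)
  moreover have "locally_constant (cp_mult T a b n)" for n
  proof -
    have "locally_constant (\<lambda>x. a i x * b (n - i) (tpow T (- i) x))" for i
    proof -
      have "locally_constant (a i)"
        using a by (simp add: cp_carrier_iff)
      moreover have "locally_constant (\<lambda>x. b (n - i) (tpow T (- i) x))"
        by (rule locally_constant_comp) (use b continuous_on_tpow [OF cont] in \<open>simp_all add: cp_carrier_iff\<close>)
      ultimately show ?thesis
        by (rule locally_constant_binop)
    qed
    then have "locally_constant (\<lambda>x. \<Sum>i\<in>cp_supp a. a i x * b (n - i) (tpow T (- i) x))"
      using fa by (intro locally_constant_sum)
    then show ?thesis
      by (simp add: cp_mult_def cp_supp_def)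
  qed
  ultimately show ?thesis
    by (simp add: cp_carrier_iff)
qed

lemma cp_carrier_star:
  assumes cont: "continuous_on UNIV T" "continuous_on UNIV (inv T)" and "\<sigma> 0 = 0"
    and a: "a \<in> cp_carrier"
  shows "cp_star \<sigma> T a \<in> cp_carrier"
proof -
  have "cp_supp (cp_star \<sigma> T a) \<subseteq> uminus ` cp_supp a"
  proof
    fix n
    assume "n \<in> cp_supp (cp_star \<sigma> T a)"
    then obtain x where "\<sigma> (a (- n) (tpow T (- n) x)) \<noteq> 0"
      by (auto simp: cp_supp_def cp_star_def fun_eq_iff)
    then have "a (- n) (tpow T (- n) x) \<noteq> 0"
      using \<open>\<sigma> 0 = 0\<close> by metis
    then have "- n \<in> cp_supp a"
      by (auto simp: cp_supp_def fun_eq_iff)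
    then show "n \<in> uminus ` cp_supp a"
      by (intro image_eqI [of _ _ "- n"]) auto
  qed
  moreover have "finite (uminus ` cp_supp a)"
    using a by (simp add: cp_carrier_iff)
  ultimately have "finite (cp_supp (cp_star \<sigma> T a))"
    by (rule finite_subset)
  moreover have "locally_constant (cp_star \<sigma> T a n)" for n
  proof -
    have lc: "locally_constant (\<lambda>x. a (- n) (tpow T (- n) x))"
      by (rule locally_constant_comp) (use a continuous_on_tpow [OF cont] in \<open>simp_all add: cp_carrier_iff\<close>)
    show ?thesis
      using locally_constant_binop [OF lc lc, of "\<lambda>u v. \<sigma> u"] by (simp add: cp_star_def)
  qed
  ultimately show ?thesis
    by (simp add: cp_carrier_iff)
qed

lemma cp_carrier_add:
  fixes a b :: "('x::topological_space, 'k::comm_ring_1) cp"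
  assumes "a \<in> cp_carrier" "b \<in> cp_carrier"
  shows "cp_add a b \<in> cp_carrier"
proof -
  have "cp_supp (cp_add a b) \<subseteq> cp_supp a \<union> cp_supp b"
    by (auto simp: cp_supp_def cp_add_def fun_eq_iff)
  then show ?thesis
    using assms unfolding cp_carrier_iff cp_add_def
    by (auto intro: finite_subset locally_constant_binop [where h = "(+)"])
qed

lemma cp_carrier_smult:
  fixes a :: "('x::topological_space, 'k::comm_ring_1) cp"
  assumes "a \<in> cp_carrier"
  shows "cp_smult c a \<in> cp_carrier"
proof -
  have "cp_supp (cp_smult c a) \<subseteq> cp_supp a"
    by (auto simp: cp_supp_def cp_smult_def fun_eq_iff) (metis mult_zero_right)
  then show ?thesis
    using assms unfolding cp_carrier_iff cp_smult_def
    by (auto intro: finite_subset locally_constant_binop [where h = "\<lambda>u v. c * u"])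
qed

lemma cp_carrier_monom:
  assumes "locally_constant f"
  shows "cp_monom f m \<in> cp_carrier"
proof -
  have "finite (cp_supp (cp_monom f m))"
    by (rule finite_subset [OF cp_supp_monom]) simp
  moreover have "locally_constant (cp_monom f m n)" for n
    using assms by (cases "n = m") (simp_all add: cp_monom_def locally_constant_const)
  ultimately show ?thesis
    by (simp add: cp_carrier_iff)
qed

lemma field_involution_inj:
  "field_involution \<sigma> \<Longrightarrow> \<sigma> a = \<sigma> b \<Longrightarrow> a = b"
  by (metis field_involution_def)

lemma field_involution_zero:
  assumes "field_involution \<sigma>"
  shows "\<sigma> 0 = 0"
proof -
  have "\<sigma> (0 + 0) = \<sigma> 0 + \<sigma> 0"
    using assms by (simp only: field_involution_def)
  then have "\<sigma> 0 = \<sigma> 0 + \<sigma> 0"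
    by simp
  then show ?thesis
    by (metis add_cancel_right_right)
qed

lemma field_involution_one:
  assumes "field_involution \<sigma>"
  shows "\<sigma> 1 = 1"
proof -
  have "\<sigma> 1 = \<sigma> 1 * \<sigma> 1"
    using assms by (metis field_involution_def mult_1)
  moreover have "\<sigma> 1 \<noteq> 0"
    using field_involution_inj [OF assms, of 1 0] field_involution_zero [OF assms] by auto
  ultimately show ?thesis
    by (metis mult_cancel_left2)
qed

lemma add_closure_base: "s \<in> S \<Longrightarrow> s \<in> add_closure S"
  using add_closure.step [OF add_closure.zero, of s S] by (simp add: cp_add_def cp_zero_def)

lemma add_closure_add:
  assumes "a \<in> add_closure S"
  shows "c \<in> add_closure S \<Longrightarrow> cp_add a c \<in> add_closure S"
proof (induction rule: add_closure.induct)
  case zero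
  then show ?case
    using assms by (simp add: cp_add_def cp_zero_def)
next
  case (step c s)
  have "cp_add a (cp_add c s) = cp_add (cp_add a c) s"
    by (simp add: cp_add_def add.assoc)
  then show ?case
    using step by (simp add: add_closure.step)
qed

lemma add_closure_least:
  assumes "S \<subseteq> C" "cp_zero \<in> C" "\<And>a b. a \<in> C \<Longrightarrow> b \<in> C \<Longrightarrow> cp_add a b \<in> C"
  shows "add_closure S \<subseteq> C"
proof
  fix a
  show "a \<in> add_closure S \<Longrightarrow> a \<in> C"
    by (induction rule: add_closure.induct) (use assms in auto)
qed

lemma add_closure_sum:
  fixes f :: "nat \<Rightarrow> ('x, 'k::comm_ring_1) cp"
  assumes "\<And>l. l < m \<Longrightarrow> f l \<in> S"
  shows "(\<lambda>n x. \<Sum>l<m. f l n x) \<in> add_closure S"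
  using assms
proof (induction m)
  case 0
  then show ?case
    using add_closure.zero by (simp add: cp_zero_def)
next
  case (Suc m)
  have "(\<lambda>n x. \<Sum>l<Suc m. f l n x) = cp_add (\<lambda>n x. \<Sum>l<m. f l n x) (f m)"
    by (simp add: cp_add_def)
  then show ?case
    using Suc by (simp add: add_closure.step)
qed

section \<open>Recurrence for ergodic homeomorphisms\<close>

lemma invariant_measure_vimage_funpow:
  assumes "invariant_measure S M" "space M = UNIV" "A \<in> sets M"
  shows "(S ^^ n) -` A \<in> sets M \<and> measure M ((S ^^ n) -` A) = measure M A"
proof (induction n)
  case (Suc n)
  have S: "S \<in> M \<rightarrow>\<^sub>M M" "\<And>A. A \<in> sets M \<Longrightarrow> measure M (S -` A) = measure M A"
    using assms(1) by (auto simp: invariant_measure_def)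
  have eq: "(S ^^ Suc n) -` A = S -` ((S ^^ n) -` A)"
    by (auto simp: funpow_swap1)
  have "S -` ((S ^^ n) -` A) \<in> sets M"
    using measurable_sets [OF S(1), of "(S ^^ n) -` A"] Suc assms(2) by simp
  then show ?case
    using Suc S(2) [of "(S ^^ n) -` A"] by (simp only: eq)
qed (simp add: assms(3))

lemma invariant_measure_inv:
  assumes "bij S" "continuous_on UNIV (inv S)" "sets M = sets borel" "invariant_measure S M"
  shows "invariant_measure (inv S) M"
proof -
  have meas: "inv S \<in> M \<rightarrow>\<^sub>M M"
    using borel_measurable_continuous_onI [OF assms(2)] measurable_cong_sets [OF assms(3) assms(3)] by simp
  have "measure M (inv S -` A) = measure M A" if A: "A \<in> sets M" for A
  proof -
    have "inv S -` A \<in> sets M"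
      using measurable_sets [OF meas A] sets_eq_imp_space_eq [OF assms(3)] by simp
    moreover have "S -` (inv S -` A) = A"
      using assms(1) by (auto simp: bij_is_inj)
    ultimately show ?thesis
      using assms(4) unfolding invariant_measure_def by metis
  qed
  then show ?thesis
    using meas by (simp add: invariant_measure_def)
qed

lemma ergodic_measure_inv:
  assumes "bij S" "ergodic_measure S M"
  shows "ergodic_measure (inv S) M"
  unfolding ergodic_measure_def
proof (intro ballI impI)
  fix A
  assume "A \<in> sets M" "inv S -` A = A"
  moreover have "S -` A = A"
  proof (intro set_eqI)
    fix x
    have "S x \<in> A \<longleftrightarrow> inv S (S x) \<in> A"
      using \<open>inv S -` A = A\<close> by blast
    then show "x \<in> S -` A \<longleftrightarrow> x \<in> A"
      using assms(1) by (simp add: bij_is_inj)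
  qed
  ultimately show "measure M A = 0 \<or> measure M A = 1"
    using assms(2) by (simp add: ergodic_measure_def)
qed

lemma wandering_set_null:
  assumes "prob_space M" "invariant_measure S M" "space M = UNIV" "A \<in> sets M"
    and disjoint: "disjoint_family (\<lambda>n. (S ^^ n) -` A)"
  shows "measure M A = 0"
proof (rule ccontr)
  interpret prob_space M
    by (rule assms(1))
  have S: "(S ^^ n) -` A \<in> sets M" "measure M ((S ^^ n) -` A) = measure M A" for n
    using invariant_measure_vimage_funpow [OF assms(2-4)] by auto
  assume "measure M A \<noteq> 0"
  then have pos: "measure M A > 0"
    using measure_nonneg [of M A] by linarith
  define K where "K = nat \<lceil>2 / measure M A\<rceil>"
  have "real K * measure M A = measure M (\<Union>n\<in>{..<K}. (S ^^ n) -` A)"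
    using disjoint S by (subst finite_measure_finite_Union) (auto simp: disjoint_family_on_def)
  also have "\<dots> \<le> 1"
    by (rule prob_le_1)
  finally have "real K * measure M A \<le> 1" .
  moreover have "real K \<ge> 2 / measure M A"
    unfolding K_def by linarith
  then have "real K * measure M A \<ge> 2"
    using pos by (simp add: field_simps)
  ultimately show False
    by simp
qed

lemma never_returning_disjoint:
  "disjoint_family (\<lambda>n. (S ^^ n) -` (E \<inter> {x. \<forall>b. (S ^^ Suc b) x \<notin> E}))"
proof -
  have sep: "(S ^^ n) -` (E \<inter> {x. \<forall>b. (S ^^ Suc b) x \<notin> E}) \<inter> (S ^^ m) -` (E \<inter> {x. \<forall>b. (S ^^ Suc b) x \<notin> E}) = {}"
    if "n < m" for n m
  proof -
    have "m = Suc (m - n - 1) + n"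
      using that by simp
    then have "(S ^^ m) x = (S ^^ Suc (m - n - 1)) ((S ^^ n) x)" for x
      by (metis funpow_add o_apply)
    then show ?thesis
      by auto
  qed
  show ?thesis
    unfolding disjoint_family_on_def
  proof (intro ballI impI)
    fix n m :: nat
    assume "n \<noteq> m"
    then show "(S ^^ n) -` (E \<inter> {x. \<forall>b. (S ^^ Suc b) x \<notin> E}) \<inter> (S ^^ m) -` (E \<inter> {x. \<forall>b. (S ^^ Suc b) x \<notin> E}) = {}"
      using sep [of n m] sep [of m n] by (cases "n < m") (auto simp: Int_commute)
  qed
qed

lemma closed_never_returning:
  fixes S :: "'a::topological_space \<Rightarrow> 'a"
  assumes "continuous_on UNIV S" "open E"
  shows "closed {x. \<forall>b. (S ^^ Suc b) x \<notin> E}"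
proof -
  have "{x. \<forall>b. (S ^^ Suc b) x \<notin> E} = (\<Inter>b. (S ^^ Suc b) -` (- E))"
    by auto
  moreover have "closed ((S ^^ Suc b) -` (- E))" for b
    using closed_vimage [OF closed_Compl [OF assms(2)] continuous_on_funpow [of S "Suc b"]] assms(1) by blast
  ultimately show ?thesis
    by (simp add: closed_INT)
qed

lemma never_returning_last_visit:
  assumes "bij S" and x: "\<forall>b. (S ^^ Suc b) x \<notin> E" and before: "\<And>a. a < a0 \<Longrightarrow> (inv S ^^ a) x \<notin> E"
  shows "\<forall>b. (S ^^ Suc b) ((inv S ^^ a0) x) \<notin> E"
proof
  fix b
  show "(S ^^ Suc b) ((inv S ^^ a0) x) \<notin> E"
  proof (cases "Suc b \<le> a0")
    case True
    then show ?thesis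
      using before [of "a0 - Suc b"] by (simp add: funpow_inv_funpow [OF assms(1)] del: funpow.simps)
  next
    case False
    then have "Suc b - a0 = Suc (b - a0)"
      by simp
    then show ?thesis
      using x False by (simp add: funpow_inv_funpow [OF assms(1)] del: funpow.simps)
  qed
qed

text \<open>A point that never returns to \<open>E\<close> but whose orbit meets \<open>E\<close> lies above its last visit to \<open>E\<close>,
  and that visit belongs to the wandering set \<open>E \<inter> N\<close>.\<close>

lemma never_returning_subset:
  fixes S :: "'a \<Rightarrow> 'a" and E :: "'a set"
  assumes "bij S"
  defines "N \<equiv> {x. \<forall>b. (S ^^ Suc b) x \<notin> E}"
  shows "N \<subseteq> (\<Union>a. (inv S ^^ a) -` (E \<inter> N)) \<union> - (\<Union>n. tpow S n -` E)"
proof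
  fix x
  assume x: "x \<in> N"
  show "x \<in> (\<Union>a. (inv S ^^ a) -` (E \<inter> N)) \<union> - (\<Union>n. tpow S n -` E)"
  proof (cases "\<exists>n. tpow S n x \<in> E")
    case True
    then obtain n where n: "tpow S n x \<in> E"
      by blast
    have "\<not> 0 < n"
    proof
      assume "0 < n"
      then have "tpow S n x = (S ^^ Suc (nat n - 1)) x"
        using tpow_int [of S "Suc (nat n - 1)"] by simp
      then show False
        using x n by (simp add: N_def)
    qed
    then have "\<exists>a. (inv S ^^ a) x \<in> E"
      using n tpow_minus_int [of S "nat (- n)"] by (intro exI [of _ "nat (- n)"]) simp
    define a0 where "a0 = (LEAST a. (inv S ^^ a) x \<in> E)"
    have a0: "(inv S ^^ a0) x \<in> E" "\<And>a. a < a0 \<Longrightarrow> (inv S ^^ a) x \<notin> E"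
      unfolding a0_def using \<open>\<exists>a. (inv S ^^ a) x \<in> E\<close> by (auto intro: LeastI_ex dest: not_less_Least)
    then have "(inv S ^^ a0) x \<in> N"
      using never_returning_last_visit [OF assms(1)] x by (simp add: N_def)
    then show ?thesis
      using a0(1) by blast
  qed blast
qed

lemma ergodic_orbit_conull:
  assumes bij: "bij S" and cont: "continuous_on UNIV S" "continuous_on UNIV (inv S)"
    and sets: "sets M = sets borel" and prob: "prob_space M" and erg: "ergodic_measure S M"
    and E: "open E" "measure M E > 0"
  shows "- (\<Union>n. tpow S n -` E) \<in> null_sets M"
proof -
  interpret prob_space M
    by (rule prob)
  define G where "G = (\<Union>n. tpow S n -` E)"
  have "open G"
    unfolding G_def using E(1) continuous_on_tpow [OF cont] by (auto intro!: open_UN open_vimage)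
  then have G: "G \<in> sets M"
    using sets by simp
  have "S -` G = G"
  proof -
    have "tpow S n (S x) = tpow S (n + 1) x" for n x
      using tpow_add [OF bij, of n 1 x] tpow_one [of S] by simp
    then have "x \<in> S -` G \<longleftrightarrow> x \<in> G" for x
      unfolding G_def by auto (metis diff_add_cancel)
    then show ?thesis
      by blast
  qed
  then have "measure M G = 0 \<or> measure M G = 1"
    using erg G by (simp add: ergodic_measure_def)
  moreover have "E \<subseteq> G"
    unfolding G_def by (auto intro!: exI [of _ 0])
  then have "measure M E \<le> measure M G"
    using G by (rule finite_measure_mono)
  ultimately have "measure M (space M - G) = 0"
    using E(2) prob_compl [OF G] by simp
  then show ?thesis
    using sets.compl_sets [OF G] sets_eq_imp_space_eq [OF sets]
    by (intro null_setsI) (simp_all add: emeasure_eq_measure Compl_eq_Diff_UNIV G_def)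
qed

lemma never_returning_null:
  assumes bij: "bij S" and cont: "continuous_on UNIV S" "continuous_on UNIV (inv S)"
    and sets: "sets M = sets borel" and prob: "prob_space M"
    and inv: "invariant_measure S M" and erg: "ergodic_measure S M"
    and E: "open E" "measure M E > 0"
  shows "{x. \<forall>b. (S ^^ Suc b) x \<notin> E} \<in> null_sets M"
proof -
  interpret prob_space M
    by (rule prob)
  define N where "N = {x. \<forall>b. (S ^^ Suc b) x \<notin> E}"
  have sp: "space M = UNIV"
    using sets_eq_imp_space_eq [OF sets] by simp
  have "closed N"
    unfolding N_def using cont(1) E(1) by (rule closed_never_returning)
  then have N: "N \<in> sets M" and A: "E \<inter> N \<in> sets M"
    using E(1) sets by simp_all
  have "measure M (E \<inter> N) = 0"
    using wandering_set_null [OF prob inv sp A never_returning_disjoint [of S E, folded N_def]] .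
  moreover have "invariant_measure (inv S) M"
    by (rule invariant_measure_inv [OF bij cont(2) sets inv])
  ultimately have "(inv S ^^ a) -` (E \<inter> N) \<in> sets M \<and> measure M ((inv S ^^ a) -` (E \<inter> N)) = 0" for a
    using invariant_measure_vimage_funpow [OF _ sp A] by simp
  then have "(inv S ^^ a) -` (E \<inter> N) \<in> null_sets M" for a
    by (intro null_setsI) (simp_all add: emeasure_eq_measure)
  then have "(\<Union>a. (inv S ^^ a) -` (E \<inter> N)) \<in> null_sets M"
    by (rule null_sets_UN)
  then have "(\<Union>a. (inv S ^^ a) -` (E \<inter> N)) \<union> - (\<Union>n. tpow S n -` E) \<in> null_sets M"
    using ergodic_orbit_conull [OF bij cont sets prob erg E] by (rule null_sets.Un)
  then show ?thesis
    using never_returning_subset [OF bij, of E] N by (simp add: null_sets_subset N_def)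
qed

locale partition_subalgebra =
  fixes T :: "'x::topological_space \<Rightarrow> 'x" and \<sigma> :: "'k::field \<Rightarrow> 'k"
    and E :: "'x set" and P :: "'x set set"
  assumes bij: "bij T"
    and continuous: "continuous_on UNIV T" and continuous_inv: "continuous_on UNIV (inv T)"
    and involution: "field_involution \<sigma>"
    and clopen_E: "clopen_set E" and partition: "is_partition P (UNIV - E)"
begin

abbreviation B :: "('x, 'k) cp set" where
  "B \<equiv> subalgB \<sigma> T P"

lemma tpow_tpow: "tpow T a (tpow T b x) = tpow T (a + b) x"
  using tpow_add [OF bij] .

lemma T_inv_T [simp]: "T (inv T x) = x" "inv T (T x) = x"
  using bij by (auto simp: bij_is_surj surj_f_inv_f bij_is_inj inv_f_f)

lemma inj_funpow: "inj (T ^^ n)"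
  using bij bij_is_inj inj_fn by blast

lemma partition_clopen: "Z \<in> P \<Longrightarrow> clopen_set Z"
  using partition by (auto simp: is_partition_def)

lemma partition_not_E: "Z \<in> P \<Longrightarrow> x \<in> Z \<Longrightarrow> x \<notin> E"
  using partition by (auto simp: is_partition_def)

lemma partition_cover: "x \<notin> E \<Longrightarrow> \<exists>Z\<in>P. x \<in> Z"
  using partition by (auto simp: is_partition_def)

lemma partition_disjoint: "Z \<in> P \<Longrightarrow> Z' \<in> P \<Longrightarrow> x \<in> Z \<Longrightarrow> x \<in> Z' \<Longrightarrow> Z = Z'"
  using partition by (auto simp: is_partition_def)

lemma subalgB_carrier: "b \<in> B \<Longrightarrow> b \<in> cp_carrier"
proof (induction rule: subalgB.induct)
  case (gen Z)
  then show ?case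
    by (simp add: cp_chit_eq_monom cp_carrier_monom locally_constant_indicator partition_clopen)
next
  case one
  then show ?case
    by (simp add: cp_one_eq_monom cp_carrier_monom locally_constant_const)
qed (simp_all add: cp_carrier_add cp_carrier_smult cp_carrier_mult cp_carrier_star
    continuous continuous_inv field_involution_zero [OF involution])

lemma subalgB_finite_supp: "b \<in> B \<Longrightarrow> finite (cp_supp b)"
  using subalgB_carrier cp_carrier_iff by blast

lemma subalgB_zero: "cp_zero \<in> B"
proof -
  have "cp_smult 0 cp_one \<in> B"
    by (intro subalgB.smult subalgB.one)
  moreover have "cp_smult 0 cp_one = (cp_zero :: ('x, 'k) cp)"
    by (simp add: cp_smult_def cp_zero_def fun_eq_iff)
  ultimately show ?thesis
    by simp
qed

section \<open>Towers\<close>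

definition is_tower :: "'x set \<Rightarrow> nat \<Rightarrow> bool" where
  "is_tower W k \<longleftrightarrow> W \<noteq> {} \<and> 0 < k \<and>
     (\<forall>w\<in>W. w \<in> E \<and> (T ^^ k) w \<in> E \<and> (\<forall>j. 0 < j \<and> j < k \<longrightarrow> (T ^^ j) w \<notin> E)) \<and>
     (\<forall>j Z. 0 < j \<and> j < k \<and> Z \<in> P \<longrightarrow> (\<forall>w\<in>W. (T ^^ j) w \<in> Z) \<or> (\<forall>w\<in>W. (T ^^ j) w \<notin> Z))"

definition tower :: "'x set \<Rightarrow> nat \<Rightarrow> 'x set" where
  "tower W k = (\<Union>l<k. (T ^^ l) ` W)"

lemma tower_levels_eq:
  assumes "is_tower W k" "is_tower W' k'" "w \<in> W" "w' \<in> W'" "p < k" "q < k'"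
    and "(T ^^ p) w = (T ^^ q) w'"
  shows "p = q \<and> w = w'"
proof -
  have no_lower: False
    if "is_tower W1 k1" "w1 \<in> W1" "is_tower W2 k2" "w2 \<in> W2" "p1 < q1" "q1 < k2"
      and "(T ^^ p1) w1 = (T ^^ q1) w2" for W1 W2 k1 k2 w1 w2 p1 q1
  proof -
    have "(T ^^ q1) w2 = (T ^^ p1) ((T ^^ (q1 - p1)) w2)"
      using that(5) by (metis funpow_add le_add_diff_inverse less_imp_le o_apply)
    then have "w1 = (T ^^ (q1 - p1)) w2"
      using that(7) inj_funpow by (metis injD)
    moreover have "(T ^^ (q1 - p1)) w2 \<notin> E" and "w1 \<in> E"
      using that(1-6) by (auto simp: is_tower_def)
    ultimately show False
      by simp
  qed
  have "p = q"
    using no_lower [OF assms(1,3,2,4) _ assms(6,7)] no_lower [OF assms(2,4,1,3) _ assms(5) assms(7) [symmetric]]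
    by (metis linorder_neqE_nat)
  then show ?thesis
    using assms(7) inj_funpow by (metis injD)
qed

text \<open>Read as a matrix indexed by the levels \<open>T\<^sup>j W\<close> of a tower, an element of \<open>B\<close> has no entries
  leaving the tower (\<open>tower_preserving\<close>), and its entries are scalars (\<open>level_constant\<close>).\<close>

definition tower_preserving :: "'x set \<Rightarrow> nat \<Rightarrow> ('x, 'k) cp \<Rightarrow> bool" where
  "tower_preserving W k b \<longleftrightarrow> (\<forall>n x w j. b n x \<noteq> 0 \<longrightarrow> w \<in> W \<longrightarrow> j < k \<longrightarrow>
     (x = (T ^^ j) w \<longrightarrow> 0 \<le> int j - n \<and> int j - n < int k) \<and>
     (tpow T (- n) x = (T ^^ j) w \<longrightarrow> 0 \<le> int j + n \<and> int j + n < int k))"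

definition level_constant :: "'x set \<Rightarrow> nat \<Rightarrow> ('x, 'k) cp \<Rightarrow> bool" where
  "level_constant W k b \<longleftrightarrow> (\<forall>j m w w'. j < k \<longrightarrow> m < k \<longrightarrow> w \<in> W \<longrightarrow> w' \<in> W \<longrightarrow>
     b (int j - int m) ((T ^^ j) w) = b (int j - int m) ((T ^^ j) w'))"

lemma tower_preservingD:
  assumes "tower_preserving W k b" "b n x \<noteq> 0" "w \<in> W" "j < k"
  shows "x = (T ^^ j) w \<Longrightarrow> 0 \<le> int j - n \<and> int j - n < int k"
    and "tpow T (- n) x = (T ^^ j) w \<Longrightarrow> 0 \<le> int j + n \<and> int j + n < int k"
  using assms unfolding tower_preserving_def by blast+

lemma tower_preserving_chit:
  assumes "is_tower W k" "Z \<in> P"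
  shows "tower_preserving W k (cp_chit Z)"
  unfolding tower_preserving_def
proof (intro allI impI conjI)
  fix n x w j
  assume "cp_chit Z n x \<noteq> (0::'k)" and w: "w \<in> W" and j: "j < k"
  then have n: "n = 1" and "x \<in> Z"
    by (auto simp: cp_chit_def split: if_splits)
  then have x: "x \<notin> E"
    using partition_not_E assms(2) by blast
  have "w \<in> E" "(T ^^ k) w \<in> E"
    using assms(1) w by (auto simp: is_tower_def)
  show "0 \<le> int j - n" "int j - n < int k" if "x = (T ^^ j) w"
    using that x \<open>w \<in> E\<close> n j by (cases j; auto)+
  show "0 \<le> int j + n" "int j + n < int k" if "tpow T (- n) x = (T ^^ j) w"
  proof -
    have "x = (T ^^ Suc j) w"
      using that n by (simp add: tpow_minus_one) (metis T_inv_T(1))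
    then have "Suc j \<noteq> k"
      using x \<open>(T ^^ k) w \<in> E\<close> by auto
    then show "0 \<le> int j + n" "int j + n < int k"
      using n j by auto
  qed
qed

lemma tower_preserving_mult:
  assumes a: "tower_preserving W k a" and b: "tower_preserving W k b"
  shows "tower_preserving W k (cp_mult T a b)"
  unfolding tower_preserving_def
proof (intro allI impI conjI)
  fix n x w j
  assume nz: "cp_mult T a b n x \<noteq> 0" and w: "w \<in> W" and j: "j < k"
  obtain i where ai: "a i x \<noteq> 0" and bi: "b (n - i) (tpow T (- i) x) \<noteq> 0"
    using nz by (rule cp_mult_nonzero_term)
  show "0 \<le> int j - n" "int j - n < int k" if x: "x = (T ^^ j) w"
  proof -
    have r: "0 \<le> int j - i \<and> int j - i < int k"
      using tower_preservingD(1) [OF a ai w j x] .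
    define l where "l = nat (int j - i)"
    have l: "int l = int j - i" "l < k"
      using r by (auto simp: l_def)
    have "tpow T (- i) x = (T ^^ l) w"
      using x r tpow_funpow [OF bij, of "- i" j w] by (simp add: l_def)
    then have "0 \<le> int l - (n - i) \<and> int l - (n - i) < int k"
      using tower_preservingD(1) [OF b bi w l(2)] by blast
    then show "0 \<le> int j - n" "int j - n < int k"
      using l by auto
  qed
  show "0 \<le> int j + n" "int j + n < int k" if x: "tpow T (- n) x = (T ^^ j) w"
  proof -
    have "tpow T (- (n - i)) (tpow T (- i) x) = (T ^^ j) w"
      using x by (simp add: tpow_tpow)
    then have r: "0 \<le> int j + (n - i) \<and> int j + (n - i) < int k"
      using tower_preservingD(2) [OF b bi w j] by blast
    define l where "l = nat (int j + (n - i))"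
    have l: "int l = int j + (n - i)" "l < k"
      using r by (auto simp: l_def)
    have "tpow T (- i) x = tpow T (n - i) (tpow T (- n) x)"
      by (simp add: tpow_tpow)
    also have "\<dots> = (T ^^ l) w"
      using x r tpow_funpow [OF bij, of "n - i" j w] by (simp add: l_def add.commute)
    finally have "0 \<le> int l + i \<and> int l + i < int k"
      using tower_preservingD(2) [OF a ai w l(2)] by blast
    then show "0 \<le> int j + n" "int j + n < int k"
      using l by auto
  qed
qed

lemma tower_preserving_star:
  assumes a: "tower_preserving W k a"
  shows "tower_preserving W k (cp_star \<sigma> T a)"
  unfolding tower_preserving_def
proof (intro allI impI conjI)
  fix n x w j
  assume "cp_star \<sigma> T a n x \<noteq> 0" and w: "w \<in> W" and j: "j < k"
  then have a_nz: "a (- n) (tpow T (- n) x) \<noteq> 0"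
    by (auto simp: cp_star_def field_involution_zero [OF involution])
  show "0 \<le> int j - n" "int j - n < int k" if "x = (T ^^ j) w"
  proof -
    have "tpow T (- (- n)) (tpow T (- n) x) = (T ^^ j) w"
      using that by (simp add: tpow_tpow)
    then show "0 \<le> int j - n" "int j - n < int k"
      using tower_preservingD(2) [OF a a_nz w j] by auto
  qed
  show "0 \<le> int j + n" "int j + n < int k" if "tpow T (- n) x = (T ^^ j) w"
    using tower_preservingD(1) [OF a a_nz w j that] by auto
qed

lemma subalgB_tower_preserving:
  assumes "is_tower W k"
  shows "b \<in> B \<Longrightarrow> tower_preserving W k b"
proof (induction rule: subalgB.induct)
  case (gen Z)
  then show ?case
    by (rule tower_preserving_chit [OF assms])
next
  case (add a b)
  then show ?case
    unfolding tower_preserving_def cp_add_def by (metis add.right_neutral add_0)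
next
  case (smult a c)
  then show ?case
    unfolding tower_preserving_def cp_smult_def by (metis mult_zero_right)
next
  case one
  then show ?case
    by (auto simp: tower_preserving_def cp_one_def)
qed (simp_all add: tower_preserving_mult tower_preserving_star)

lemma level_constant_chit:
  assumes "is_tower W k" "Z \<in> P"
  shows "level_constant W k (cp_chit Z)"
  unfolding level_constant_def
proof (intro allI impI)
  fix j m w w'
  assume "j < k" "m < k" "w \<in> W" "w' \<in> W"
  show "cp_chit Z (int j - int m) ((T ^^ j) w) = (cp_chit Z (int j - int m) ((T ^^ j) w') :: 'k)"
  proof (cases "int j - int m = 1")
    case True
    then have "(\<forall>w\<in>W. (T ^^ j) w \<in> Z) \<or> (\<forall>w\<in>W. (T ^^ j) w \<notin> Z)"
      using assms \<open>j < k\<close> unfolding is_tower_def by auto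
    then show ?thesis
      using \<open>w \<in> W\<close> \<open>w' \<in> W\<close> by (auto simp: cp_chit_def)
  qed (simp add: cp_chit_def)
qed

lemma level_constant_add:
  assumes "level_constant W k a" "level_constant W k b"
  shows "level_constant W k (cp_add a b)"
  unfolding level_constant_def
proof (intro allI impI)
  fix j m w w'
  assume "j < k" "m < k" "w \<in> W" "w' \<in> W"
  then have "a (int j - int m) ((T ^^ j) w) = a (int j - int m) ((T ^^ j) w')"
    and "b (int j - int m) ((T ^^ j) w) = b (int j - int m) ((T ^^ j) w')"
    using assms unfolding level_constant_def by blast+
  then show "cp_add a b (int j - int m) ((T ^^ j) w) = cp_add a b (int j - int m) ((T ^^ j) w')"
    by (simp add: cp_add_def)
qed

lemma level_constant_smult:
  assumes "level_constant W k a"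
  shows "level_constant W k (cp_smult c a)"
  unfolding level_constant_def
proof (intro allI impI)
  fix j m w w'
  assume "j < k" "m < k" "w \<in> W" "w' \<in> W"
  then have "a (int j - int m) ((T ^^ j) w) = a (int j - int m) ((T ^^ j) w')"
    using assms unfolding level_constant_def by blast
  then show "cp_smult c a (int j - int m) ((T ^^ j) w) = cp_smult c a (int j - int m) ((T ^^ j) w')"
    by (simp add: cp_smult_def)
qed

lemma level_constant_mult:
  assumes a: "tower_preserving W k a" "level_constant W k a" and b: "level_constant W k b"
  shows "level_constant W k (cp_mult T a b)"
  unfolding level_constant_def
proof (intro allI impI)
  fix j m w w'
  assume j: "j < k" and m: "m < k" and w: "w \<in> W" "w' \<in> W"
  let ?F = "\<lambda>v i. a i ((T ^^ j) v) * b (int j - int m - i) (tpow T (- i) ((T ^^ j) v))"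
  have "?F w i = ?F w' i" for i
  proof (cases "0 \<le> int j - i \<and> int j - i < int k")
    case True
    define l where "l = nat (int j - i)"
    have l: "i = int j - int l" "l < k"
      using True by (auto simp: l_def)
    have "tpow T (- i) ((T ^^ j) v) = (T ^^ l) v" for v
      using True tpow_funpow [OF bij, of "- i" j v] by (simp add: l_def)
    moreover have "a i ((T ^^ j) w) = a i ((T ^^ j) w')"
      using a(2) j l w unfolding level_constant_def by blast
    moreover have "b (int l - int m) ((T ^^ l) w) = b (int l - int m) ((T ^^ l) w')"
      using b m l w unfolding level_constant_def by blast
    ultimately show ?thesis
      using l(1) by simp
  next
    case False
    then have "a i ((T ^^ j) v) = 0" if "v \<in> W" for v
      using tower_preservingD(1) [OF a(1) _ that j] by blast
    then show ?thesis
      using w by simp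
  qed
  then show "cp_mult T a b (int j - int m) ((T ^^ j) w) = cp_mult T a b (int j - int m) ((T ^^ j) w')"
    unfolding cp_mult_def by simp
qed

lemma level_constant_star:
  assumes a: "level_constant W k a"
  shows "level_constant W k (cp_star \<sigma> T a)"
  unfolding level_constant_def
proof (intro allI impI)
  fix j m w w'
  assume "j < k" "m < k" "w \<in> W" "w' \<in> W"
  then have "a (int m - int j) ((T ^^ m) w) = a (int m - int j) ((T ^^ m) w')"
    using a unfolding level_constant_def by blast
  moreover have "tpow T (- (int j - int m)) ((T ^^ j) v) = (T ^^ m) v" for v
    using tpow_funpow [OF bij, of "- (int j - int m)" j v] by simp
  ultimately show "cp_star \<sigma> T a (int j - int m) ((T ^^ j) w) = cp_star \<sigma> T a (int j - int m) ((T ^^ j) w')"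
    unfolding cp_star_def by simp
qed

lemma subalgB_level_constant:
  assumes "is_tower W k"
  shows "b \<in> B \<Longrightarrow> level_constant W k b"
proof (induction rule: subalgB.induct)
  case one
  then show ?case
    by (simp add: level_constant_def cp_one_def)
qed (simp_all add: assms level_constant_chit level_constant_add level_constant_smult
    level_constant_mult level_constant_star subalgB_tower_preserving)

lemma subalgB_coeff_level:
  assumes "is_tower W k" "b \<in> B" "w \<in> W" "l < k" "b p ((T ^^ l) w) \<noteq> 0"
  shows "0 \<le> int l - p \<and> int l - p < int k" "tpow T (- p) ((T ^^ l) w) = (T ^^ nat (int l - p)) w"
proof -
  show "0 \<le> int l - p \<and> int l - p < int k"
    using tower_preservingD(1) [OF subalgB_tower_preserving [OF assms(1,2)] assms(5,3,4) refl] .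
  then show "tpow T (- p) ((T ^^ l) w) = (T ^^ nat (int l - p)) w"
    using tpow_funpow [OF bij, of "- p" l w] by simp
qed

lemma subalgB_coeff_between_levels:
  assumes W: "is_tower W k" and "b \<in> B" "w \<in> W" "l < k" "m < k"
    and "tpow T (- p) ((T ^^ l) w) \<in> (T ^^ m) ` W" "b p ((T ^^ l) w) \<noteq> 0"
  shows "p = int l - int m"
proof -
  obtain w' where "w' \<in> W" "(T ^^ nat (int l - p)) w = (T ^^ m) w'"
    using assms(6) subalgB_coeff_level(2) [OF assms(1-4,7)] by auto
  then have "nat (int l - p) = m"
    using tower_levels_eq [OF W W assms(3) _ _ assms(5)] subalgB_coeff_level(1) [OF assms(1-4,7)]
    by (simp add: nat_less_iff)
  then show ?thesis
    using subalgB_coeff_level(1) [OF assms(1-4,7)] by auto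
qed

lemma subalgB_tower_iff:
  assumes W: "is_tower W k" and b: "b \<in> B" and nz: "b n x \<noteq> 0"
  shows "x \<in> tower W k \<longleftrightarrow> tpow T (- n) x \<in> tower W k"
proof
  have pres: "tower_preserving W k b"
    using subalgB_tower_preserving [OF W b] .
  show "tpow T (- n) x \<in> tower W k" if in_tower: "x \<in> tower W k"
  proof -
    obtain j w where j: "j < k" and w: "w \<in> W" and x: "x = (T ^^ j) w"
      using in_tower unfolding tower_def by blast
    have r: "0 \<le> int j - n \<and> int j - n < int k"
      using tower_preservingD(1) [OF pres nz w j x] .
    then have "tpow T (- n) x = (T ^^ nat (int j - n)) w"
      using x tpow_funpow [OF bij, of "- n" j w] by simp
    moreover have "nat (int j - n) < k"
      using r by auto
    ultimately show ?thesis
      using w by (auto simp: tower_def)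
  qed
  show "x \<in> tower W k" if in_tower: "tpow T (- n) x \<in> tower W k"
  proof -
    obtain j w where j: "j < k" and w: "w \<in> W" and x: "tpow T (- n) x = (T ^^ j) w"
      using in_tower unfolding tower_def by blast
    have r: "0 \<le> int j + n \<and> int j + n < int k"
      using tower_preservingD(2) [OF pres nz w j x] .
    have "x = tpow T n (tpow T (- n) x)"
      by (simp add: tpow_tpow)
    also have "\<dots> = (T ^^ nat (int j + n)) w"
      using x r tpow_funpow [OF bij, of n j w] by (simp add: add.commute)
    finally have "x = (T ^^ nat (int j + n)) w" .
    moreover have "nat (int j + n) < k"
      using r by auto
    ultimately show ?thesis
      using w by (auto simp: tower_def)
  qed
qed

abbreviation V :: "'x set set" where
  "V \<equiv> Vsets T E P"

abbreviation height :: "'x set \<Rightarrow> nat" where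
  "height W \<equiv> Wlen T E P W"

lemma Wset_length_unique:
  assumes "set Zs \<subseteq> P" "set Zs' \<subseteq> P" "x \<in> Wset T E Zs" "x \<in> Wset T E Zs'"
  shows "length Zs = length Zs'"
proof -
  have not_shorter: False
    if "set Zs2 \<subseteq> P" "x \<in> Wset T E Zs1" "x \<in> Wset T E Zs2" "length Zs1 < length Zs2" for Zs1 Zs2
  proof -
    have "(T ^^ Suc (length Zs1)) x \<in> E"
      using that(2) by (simp add: Wset_def)
    moreover have "(T ^^ Suc (length Zs1)) x \<in> Zs2 ! length Zs1" "Zs2 ! length Zs1 \<in> P"
      using that(1,3,4) by (auto simp: Wset_def)
    ultimately show False
      using partition_not_E by blast
  qed
  show ?thesis
    using not_shorter [OF assms(2,3,4)] not_shorter [OF assms(1,4,3)] by (metis linorder_neqE_nat)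
qed

lemma Wlen_Wset:
  assumes "W \<noteq> {}" "set Zs \<subseteq> P" "W = Wset T E Zs"
  shows "height W = Suc (length Zs)"
  unfolding Wlen_def
proof (rule Least_equality)
  show "\<exists>Zs'. set Zs' \<subseteq> P \<and> W = Wset T E Zs' \<and> Suc (length Zs) = Suc (length Zs')"
    using assms by blast
next
  fix y
  assume "\<exists>Zs'. set Zs' \<subseteq> P \<and> W = Wset T E Zs' \<and> y = Suc (length Zs')"
  then obtain Zs' where Zs': "set Zs' \<subseteq> P" "W = Wset T E Zs'" "y = Suc (length Zs')"
    by blast
  obtain x where "x \<in> W"
    using assms(1) by blast
  then show "Suc (length Zs) \<le> y"
    using Wset_length_unique [OF assms(2) Zs'(1)] assms(3) Zs'(2,3) by simp
qed

lemma Vsets_is_tower: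
  assumes "W \<in> V"
  shows "is_tower W (height W)"
proof -
  obtain Zs where Zs: "W \<noteq> {}" "set Zs \<subseteq> P" "W = Wset T E Zs"
    using assms by (auto simp: Vsets_def)
  have level: "(T ^^ j) w \<in> Zs ! (j - 1)" "Zs ! (j - 1) \<in> P"
    if "w \<in> W" "0 < j" "j < Suc (length Zs)" for w j
    using that Zs(2,3) by (auto simp: Wset_def gr0_conv_Suc)
  show ?thesis
    unfolding is_tower_def Wlen_Wset [OF Zs]
  proof (intro conjI ballI allI impI)
    fix w
    assume "w \<in> W"
    then show "w \<in> E" "(T ^^ Suc (length Zs)) w \<in> E"
      using Zs(3) by (simp_all add: Wset_def)
    fix j
    assume "0 < j \<and> j < Suc (length Zs)"
    then show "(T ^^ j) w \<notin> E"
      using level \<open>w \<in> W\<close> partition_not_E by blast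
  next
    fix j Z
    assume "0 < j \<and> j < Suc (length Zs) \<and> Z \<in> P"
    then show "(\<forall>w\<in>W. (T ^^ j) w \<in> Z) \<or> (\<forall>w\<in>W. (T ^^ j) w \<notin> Z)"
      using level partition_disjoint by metis
  qed (use Zs(1) in simp_all)
qed

lemma Vsets_towers_disjoint:
  assumes W: "W \<in> V" and W': "W' \<in> V"
    and x: "x \<in> tower W (height W)" "x \<in> tower W' (height W')"
  shows "W = W'"
proof -
  obtain p w where p: "p < height W" "w \<in> W" "x = (T ^^ p) w"
    using x(1) unfolding tower_def by blast
  obtain q w' where q: "q < height W'" "w' \<in> W'" "x = (T ^^ q) w'"
    using x(2) unfolding tower_def by blast
  have "w = w'"
    using tower_levels_eq [OF Vsets_is_tower [OF W] Vsets_is_tower [OF W'] p(2) q(2) p(1) q(1)] p(3) q(3)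
    by simp
  obtain Zs where Zs: "set Zs \<subseteq> P" "W = Wset T E Zs"
    using W by (auto simp: Vsets_def)
  obtain Zs' where Zs': "set Zs' \<subseteq> P" "W' = Wset T E Zs'"
    using W' by (auto simp: Vsets_def)
  have len: "length Zs = length Zs'"
    using Wset_length_unique [OF Zs(1) Zs'(1)] p(2) q(2) \<open>w = w'\<close> Zs(2) Zs'(2) by blast
  have "Zs ! i = Zs' ! i" if "i < length Zs" for i
  proof -
    have "(T ^^ Suc i) w \<in> Zs ! i" "(T ^^ Suc i) w \<in> Zs' ! i"
      using p(2) q(2) \<open>w = w'\<close> Zs(2) Zs'(2) that len by (simp_all add: Wset_def)
    moreover have "Zs ! i \<in> P" "Zs' ! i \<in> P"
      using Zs(1) Zs'(1) that len by auto
    ultimately show ?thesis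
      using partition_disjoint by blast
  qed
  then have "Zs = Zs'"
    using len by (simp add: nth_equalityI)
  then show ?thesis
    using Zs(2) Zs'(2) by simp
qed

lemma first_return_in_Vsets:
  assumes "w \<in> E" "0 < k" "(T ^^ k) w \<in> E" and no_return: "\<And>j. 0 < j \<Longrightarrow> j < k \<Longrightarrow> (T ^^ j) w \<notin> E"
  obtains W where "W \<in> V" "w \<in> W" "height W = k"
proof -
  define Zs where "Zs = map (\<lambda>j. SOME Z. Z \<in> P \<and> (T ^^ Suc j) w \<in> Z) [0..<k - 1]"
  have length_Zs: "Suc (length Zs) = k"
    using assms(2) by (simp add: Zs_def)
  have Zs: "Zs ! i \<in> P \<and> (T ^^ Suc i) w \<in> Zs ! i" if "i < length Zs" for i
  proof -
    have "\<exists>Z. Z \<in> P \<and> (T ^^ Suc i) w \<in> Z"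
      using that length_Zs no_return [of "Suc i"] partition_cover by auto
    then show ?thesis
      using that by (simp add: Zs_def) (rule someI_ex)
  qed
  have "set Zs \<subseteq> P"
    using Zs by (auto simp: in_set_conv_nth)
  moreover have "w \<in> Wset T E Zs"
    unfolding Wset_def using assms(1,3) Zs length_Zs by auto
  ultimately show ?thesis
    using that [of "Wset T E Zs"] Wlen_Wset [of "Wset T E Zs" Zs] length_Zs
    by (auto simp: Vsets_def)
qed

lemma Vsets_cover:
  assumes forward: "\<exists>b. (T ^^ Suc b) x \<in> E" and backward: "\<exists>a. (inv T ^^ a) x \<in> E"
  shows "\<exists>W\<in>V. x \<in> tower W (height W)"
proof -
  define a0 where "a0 = (LEAST a. (inv T ^^ a) x \<in> E)"
  define b0 where "b0 = (LEAST b. (T ^^ Suc b) x \<in> E)"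
  have a0: "(inv T ^^ a0) x \<in> E" "\<And>a. a < a0 \<Longrightarrow> (inv T ^^ a) x \<notin> E"
    unfolding a0_def using backward by (auto intro: LeastI_ex dest: not_less_Least)
  have b0: "(T ^^ Suc b0) x \<in> E" "\<And>b. b < b0 \<Longrightarrow> (T ^^ Suc b) x \<notin> E"
    unfolding b0_def using forward by (auto intro: LeastI_ex dest: not_less_Least)
  define w where "w = (inv T ^^ a0) x"
  have orbit: "(T ^^ j) w = (if j \<le> a0 then (inv T ^^ (a0 - j)) x else (T ^^ Suc (j - a0 - 1)) x)" for j
    unfolding w_def funpow_inv_funpow [OF bij] by (simp add: Suc_diff_Suc)
  have "(T ^^ j) w \<notin> E" if "0 < j" "j < a0 + Suc b0" for j
    using a0(2) [of "a0 - j"] b0(2) [of "j - a0 - 1"] that by (simp add: orbit)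
  moreover have "(T ^^ (a0 + Suc b0)) w \<in> E"
    using b0(1) by (simp add: orbit del: funpow.simps)
  ultimately obtain W where "W \<in> V" "w \<in> W" "height W = a0 + Suc b0"
    using first_return_in_Vsets [of w "a0 + Suc b0"] a0(1) w_def by auto
  moreover have "x = (T ^^ a0) w"
    using orbit [of a0] by simp
  ultimately show ?thesis
    unfolding tower_def by force
qed

section \<open>Matrix units in \<open>B\<close>\<close>

lemma cp_star_indicator:
  "cp_star \<sigma> T (cp_monom (indicator A) i) = cp_monom (indicator (tpow T i -` A)) (- i)"
  by (simp add: cp_star_monom field_involution_zero [OF involution])
    (rule cp_monom_cong, simp add: indicator_def field_involution_zero [OF involution]
      field_involution_one [OF involution])

lemma cp_mult_indicator:
  "cp_mult T (cp_monom (indicator A) i) (cp_monom (indicator C) j) =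
    (cp_monom (indicator (A \<inter> tpow T (- i) -` C)) (i + j) :: ('x, 'k) cp)"
  by (simp add: cp_mult_monom) (rule cp_monom_cong, simp add: indicator_def)

lemma one_minus_indicator:
  "cp_add cp_one (cp_smult (- 1) (cp_monom (indicator A) 0)) = (cp_monom (indicator (- A)) 0 :: ('x, 'k) cp)"
  by (simp add: cp_one_eq_monom cp_smult_monom cp_add_monom) (rule cp_monom_cong, simp add: indicator_def)

lemma tpow_vimage_cancel: "tpow T (- i) -` (tpow T i -` A) = A"
  by (auto simp: tpow_tpow)

text \<open>The element \<open>s = \<chi>\<^bsub>X\<setminus>E\<^esub> t = \<Sum>\<^bsub>Z\<in>P\<^esub> \<chi>\<^sub>Z t\<close>.\<close>

abbreviation shift :: "('x, 'k) cp" where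
  "shift \<equiv> cp_monom (indicator (UNIV - E)) 1"

lemma shift_in_B: "shift \<in> B"
proof -
  have "finite F \<Longrightarrow> F \<subseteq> P \<Longrightarrow> (cp_monom (indicator (\<Union>F)) 1 :: ('x, 'k) cp) \<in> B" for F
  proof (induction F rule: finite_induct)
    case empty
    then show ?case
      using subalgB_zero by (simp add: cp_zero_eq_monom [of 1])
  next
    case (insert Z F)
    have disj: "Z \<inter> \<Union>F = {}"
      using insert partition_disjoint by blast
    have "cp_add (cp_monom (indicator (\<Union>F)) 1) (cp_chit Z) = (cp_monom (indicator (\<Union>(insert Z F))) 1 :: ('x, 'k) cp)"
      unfolding cp_chit_eq_monom cp_add_monom by (rule cp_monom_cong) (use disj in \<open>auto simp: indicator_def\<close>)
    moreover have "cp_add (cp_monom (indicator (\<Union>F)) 1) (cp_chit Z) \<in> B"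
      using insert by (intro subalgB.add subalgB.gen) auto
    ultimately show ?case
      by simp
  qed
  moreover have "\<Union>P = UNIV - E" "finite P"
    using partition by (simp_all add: is_partition_def)
  ultimately show ?thesis
    by (metis order_refl)
qed

lemma indicator_E_in_B: "(cp_monom (indicator E) 0 :: ('x, 'k) cp) \<in> B"
proof -
  have "cp_mult T shift (cp_star \<sigma> T shift) = (cp_monom (indicator (UNIV - E)) 0 :: ('x, 'k) cp)"
    by (simp add: cp_star_indicator cp_mult_indicator tpow_vimage_cancel [of 1, simplified])
  then have "cp_add cp_one (cp_smult (- 1) (cp_mult T shift (cp_star \<sigma> T shift))) = (cp_monom (indicator E) 0 :: ('x, 'k) cp)"
    by (simp add: one_minus_indicator Compl_eq_Diff_UNIV [symmetric])
  moreover have "cp_add cp_one (cp_smult (- 1) (cp_mult T shift (cp_star \<sigma> T shift))) \<in> B"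
    using shift_in_B by (intro subalgB.intros)
  ultimately show ?thesis
    by simp
qed

lemma indicator_vimage_E_in_B: "(cp_monom (indicator (T -` E)) 0 :: ('x, 'k) cp) \<in> B"
proof -
  have "cp_mult T (cp_star \<sigma> T shift) shift = (cp_monom (indicator (T -` (UNIV - E))) 0 :: ('x, 'k) cp)"
    by (simp add: cp_star_indicator cp_mult_indicator tpow_one)
  then have "cp_add cp_one (cp_smult (- 1) (cp_mult T (cp_star \<sigma> T shift) shift)) = (cp_monom (indicator (T -` E)) 0 :: ('x, 'k) cp)"
    by (simp add: one_minus_indicator) (rule cp_monom_cong, auto simp: indicator_def)
  moreover have "cp_add cp_one (cp_smult (- 1) (cp_mult T (cp_star \<sigma> T shift) shift)) \<in> B"
    using shift_in_B by (intro subalgB.intros)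
  ultimately show ?thesis
    by simp
qed

lemma indicator_block_in_B:
  assumes "Z \<in> P"
  shows "(cp_monom (indicator Z) 0 :: ('x, 'k) cp) \<in> B"
proof -
  have "cp_mult T (cp_chit Z) (cp_star \<sigma> T (cp_chit Z)) = (cp_monom (indicator Z) 0 :: ('x, 'k) cp)"
    by (simp add: cp_chit_eq_monom cp_star_indicator cp_mult_indicator tpow_vimage_cancel [of 1, simplified])
  moreover have "cp_mult T (cp_chit Z) (cp_star \<sigma> T (cp_chit Z)) \<in> B"
    using assms by (intro subalgB.intros)
  ultimately show ?thesis
    by simp
qed

lemma indicator_vimage_in_B:
  assumes "C \<subseteq> UNIV - E" "(cp_monom (indicator C) 0 :: ('x, 'k) cp) \<in> B"
  shows "(cp_monom (indicator (T -` C)) 0 :: ('x, 'k) cp) \<in> B"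
proof -
  have "cp_mult T (cp_mult T (cp_star \<sigma> T shift) (cp_monom (indicator C) 0)) shift =
      (cp_monom (indicator (T -` C)) 0 :: ('x, 'k) cp)"
    by (simp add: cp_star_indicator cp_mult_indicator tpow_one)
      (rule cp_monom_cong, use assms(1) in \<open>auto simp: indicator_def\<close>)
  moreover have "cp_mult T (cp_mult T (cp_star \<sigma> T shift) (cp_monom (indicator C) 0)) shift \<in> B"
    using shift_in_B assms(2) by (intro subalgB.intros)
  ultimately show ?thesis
    by simp
qed

text \<open>\<open>return_set [Z\<^sub>1, \<dots>, Z\<^sub>n] = Z\<^sub>1 \<inter> T\<^sup>-\<^sup>1 Z\<^sub>2 \<inter> \<dots> \<inter> T\<^sup>-\<^sup>n E\<close>, so that \<open>Wset T E Zs = E \<inter> T\<^sup>-\<^sup>1 (return_set Zs)\<close>.\<close>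

definition return_set :: "'x set list \<Rightarrow> 'x set" where
  "return_set Zs = {x. (\<forall>i<length Zs. (T ^^ i) x \<in> Zs ! i) \<and> (T ^^ length Zs) x \<in> E}"

lemma return_set_Nil: "return_set [] = E"
  by (simp add: return_set_def)

lemma return_set_Cons: "return_set (Z # Zs) = Z \<inter> T -` return_set Zs"
proof (intro set_eqI iffI)
  fix x
  assume x: "x \<in> return_set (Z # Zs)"
  then have "x \<in> Z"
    by (auto simp: return_set_def)
  moreover have "(T ^^ i) (T x) \<in> Zs ! i" if "i < length Zs" for i
    using x that by (auto simp: return_set_def funpow_swap1 dest: spec [of _ "Suc i"])
  ultimately show "x \<in> Z \<inter> T -` return_set Zs"
    using x by (simp add: return_set_def funpow_swap1)
next
  fix x
  assume x: "x \<in> Z \<inter> T -` return_set Zs"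
  have "(T ^^ i) x \<in> (Z # Zs) ! i" if "i < Suc (length Zs)" for i
    using x that by (cases i) (auto simp: return_set_def funpow_swap1)
  then show "x \<in> return_set (Z # Zs)"
    using x by (simp add: return_set_def funpow_swap1)
qed

lemma cp_mult_indicator_zero:
  "cp_mult T (cp_monom (indicator A) 0) (cp_monom (indicator C) 0) = (cp_monom (indicator (A \<inter> C)) 0 :: ('x, 'k) cp)"
  by (simp add: cp_mult_indicator)

lemma indicator_return_set_in_B:
  "set Zs \<subseteq> P \<Longrightarrow> (cp_monom (indicator (T -` return_set Zs)) 0 :: ('x, 'k) cp) \<in> B"
proof (induction Zs)
  case Nil
  then show ?case
    using indicator_vimage_E_in_B by (simp add: return_set_Nil)
next
  case (Cons Z Zs)
  then have "(cp_monom (indicator (Z \<inter> T -` return_set Zs)) 0 :: ('x, 'k) cp) \<in> B"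
    using indicator_block_in_B [of Z] subalgB.mult by (simp flip: cp_mult_indicator_zero)
  moreover have "Z \<inter> T -` return_set Zs \<subseteq> UNIV - E"
    using Cons.prems partition_not_E by auto
  ultimately show ?case
    unfolding return_set_Cons by (rule indicator_vimage_in_B [rotated])
qed

lemma indicator_Vsets_in_B:
  assumes "W \<in> V"
  shows "(cp_monom (indicator W) 0 :: ('x, 'k) cp) \<in> B"
proof -
  obtain Zs where Zs: "set Zs \<subseteq> P" "W = Wset T E Zs"
    using assms by (auto simp: Vsets_def)
  have "W = E \<inter> T -` return_set Zs"
    using Zs(2) by (auto simp: Wset_def return_set_def funpow_swap1)
  then show ?thesis
    using indicator_E_in_B indicator_return_set_in_B [OF Zs(1)] subalgB.mult
    by (simp flip: cp_mult_indicator_zero)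
qed

text \<open>The matrix unit \<open>e\<^sub>m\<^sub>l(W) = s\<^sup>m \<chi>\<^sub>W (s\<^sup>*)\<^sup>l\<close>; it is a single monomial because \<open>s\<^sup>m \<chi>\<^sub>W\<close> follows the
  points of \<open>W\<close> up the tower.\<close>

definition matrix_unit :: "'x set \<Rightarrow> nat \<Rightarrow> nat \<Rightarrow> ('x, 'k) cp" where
  "matrix_unit W m l = cp_monom (indicator ((T ^^ m) ` W)) (int m - int l)"

lemma matrix_unit_column_zero_in_B:
  assumes W: "W \<in> V" and m: "m < height W"
  shows "matrix_unit W m 0 \<in> B"
  using m
proof (induction m)
  case 0
  then show ?case
    using indicator_Vsets_in_B [OF W] by (simp add: matrix_unit_def)
next
  case (Suc m)
  have "(UNIV - E) \<inter> tpow T (- 1) -` ((T ^^ m) ` W) = (T ^^ Suc m) ` W"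
  proof (intro set_eqI iffI)
    fix x
    assume "x \<in> (UNIV - E) \<inter> tpow T (- 1) -` ((T ^^ m) ` W)"
    then obtain w where "w \<in> W" "inv T x = (T ^^ m) w"
      by (auto simp: tpow_minus_one)
    then show "x \<in> (T ^^ Suc m) ` W"
      by (metis T_inv_T(1) funpow.simps(2) image_eqI o_apply)
  next
    fix x
    assume "x \<in> (T ^^ Suc m) ` W"
    then obtain w where w: "w \<in> W" "x = (T ^^ Suc m) w"
      by blast
    then have "x \<notin> E"
      using Vsets_is_tower [OF W] Suc.prems unfolding is_tower_def by blast
    then show "x \<in> (UNIV - E) \<inter> tpow T (- 1) -` ((T ^^ m) ` W)"
      using w by (auto simp: tpow_minus_one)
  qed
  then have "cp_mult T shift (matrix_unit W m 0) = matrix_unit W (Suc m) 0"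
    by (simp add: matrix_unit_def cp_mult_indicator add.commute)
  moreover have "cp_mult T shift (matrix_unit W m 0) \<in> B"
    using Suc shift_in_B by (intro subalgB.mult) auto
  ultimately show ?case
    by simp
qed

lemma tpow_minus_funpow: "tpow T (- int m) ((T ^^ m) w) = w"
  using tpow_funpow [OF bij, of "- int m" m w] by simp

lemma matrix_unit_in_B:
  assumes W: "W \<in> V" and "m < height W" "l < height W"
  shows "matrix_unit W m l \<in> B"
proof -
  have "(T ^^ m) ` W \<inter> tpow T (- int m) -` (tpow T (int l) -` (T ^^ l) ` W) = (T ^^ m) ` W"
    by (auto simp: tpow_minus_funpow tpow_int)
  then have "cp_mult T (matrix_unit W m 0) (cp_star \<sigma> T (matrix_unit W l 0)) = matrix_unit W m l"
    by (simp add: matrix_unit_def cp_star_indicator cp_mult_indicator)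
  moreover have "cp_mult T (matrix_unit W m 0) (cp_star \<sigma> T (matrix_unit W l 0)) \<in> B"
    using matrix_unit_column_zero_in_B assms by (intro subalgB.intros)
  ultimately show ?thesis
    by simp
qed

lemma tower_levels_disjoint:
  assumes "W \<in> V" "l < height W" "l' < height W" "l \<noteq> l'"
  shows "(T ^^ l) ` W \<inter> (T ^^ l') ` W = {}"
  using tower_levels_eq [OF Vsets_is_tower Vsets_is_tower] assms by blast

lemma hW_eq_indicator_tower:
  assumes "W \<in> V"
  shows "(hW T E P W :: ('x, 'k) cp) = cp_monom (indicator (tower W (height W))) 0"
proof -
  have "disjoint_family_on (\<lambda>l. (T ^^ l) ` W) {..<height W}"
    using tower_levels_disjoint [OF assms] by (auto simp: disjoint_family_on_def)
  then show ?thesis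
    by (auto simp: hW_def cp_chi_eq_monom cp_monom_def fun_eq_iff tower_def indicator_UN_disjoint)
qed

lemma hW_in_B:
  assumes W: "W \<in> V"
  shows "(hW T E P W :: ('x, 'k) cp) \<in> B"
proof -
  have "m \<le> height W \<Longrightarrow> ((\<lambda>n x. \<Sum>l<m. cp_chi ((T ^^ l) ` W) n x) :: ('x, 'k) cp) \<in> B" for m
  proof (induction m)
    case 0
    then show ?case
      using subalgB_zero by (simp add: cp_zero_def)
  next
    case (Suc m)
    have "matrix_unit W m m \<in> B"
      using Suc.prems matrix_unit_in_B [OF W] by simp
    then have "cp_add (\<lambda>n x. \<Sum>l<m. cp_chi ((T ^^ l) ` W) n x) (cp_chi ((T ^^ m) ` W)) \<in> B"
      using Suc by (intro subalgB.add) (auto simp: matrix_unit_def cp_chi_eq_monom)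
    then show ?case
      by (simp add: cp_add_def)
  qed
  then show ?thesis
    unfolding hW_def by simp
qed

abbreviation hproj :: "'x set \<Rightarrow> ('x, 'k) cp" where
  "hproj W \<equiv> hW T E P W"

abbreviation tower_of :: "'x set \<Rightarrow> 'x set" where
  "tower_of W \<equiv> tower W (height W)"

lemma hproj_mult: "W \<in> V \<Longrightarrow> cp_mult T (hproj W) b n x = indicator (tower_of W) x * b n x"
  by (simp add: hW_eq_indicator_tower cp_mult_monom_left)

lemma hproj_commute:
  assumes W: "W \<in> V" and b: "b \<in> B"
  shows "cp_mult T b (hproj W) = cp_mult T (hproj W) b"
proof (intro ext)
  fix n x
  have "b n x * indicator (tower_of W) (tpow T (- n) x) = indicator (tower_of W) x * b n x"
    using subalgB_tower_iff [OF Vsets_is_tower [OF W] b] by (cases "b n x = 0") (simp_all add: indicator_def)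
  then show "cp_mult T b (hproj W) n x = cp_mult T (hproj W) b n x"
    using subalgB_finite_supp [OF b] by (simp add: hW_eq_indicator_tower [OF W] cp_mult_monom_right cp_mult_monom_left)
qed

lemma hproj_mult_left_assoc:
  assumes W: "W \<in> V" and r: "r \<in> B"
  shows "cp_mult T r (cp_mult T (hproj W) b) = cp_mult T (hproj W) (cp_mult T r b)"
proof (intro ext)
  fix n x
  have move: "r i x * (indicator (tower_of W) (tpow T (- i) x) * b (n - i) (tpow T (- i) x)) =
      indicator (tower_of W) x * (r i x * b (n - i) (tpow T (- i) x))" for i
    using subalgB_tower_iff [OF Vsets_is_tower [OF W] r] by (cases "r i x = 0") (simp_all add: indicator_def)
  show "cp_mult T r (cp_mult T (hproj W) b) n x = cp_mult T (hproj W) (cp_mult T r b) n x"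
    unfolding hproj_mult [OF W] unfolding cp_mult_def hproj_mult [OF W]
    by (simp add: move sum_distrib_left)
qed

lemma hproj_mult_right_assoc:
  assumes "W \<in> V" "b \<in> B"
  shows "cp_mult T (cp_mult T (hproj W) b) r = cp_mult T (hproj W) (cp_mult T b r)"
  using cp_mult_monom_zero_assoc [OF subalgB_finite_supp [OF assms(2)]]
  by (simp add: hW_eq_indicator_tower [OF assms(1)])

lemma hproj_mult_in_B: "W \<in> V \<Longrightarrow> b \<in> B \<Longrightarrow> cp_mult T (hproj W) b \<in> B"
  using hW_in_B by (simp add: subalgB.mult)

definition tower_ideal :: "('x, 'k) cp set" where
  "tower_ideal = add_closure (\<Union>W\<in>V. {cp_mult T (hproj W) b | b. b \<in> B})"

lemma hproj_mult_in_tower_ideal: "W \<in> V \<Longrightarrow> b \<in> B \<Longrightarrow> cp_mult T (hproj W) b \<in> tower_ideal"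
  unfolding tower_ideal_def by (rule add_closure_base) blast

lemma tower_ideal_zero: "cp_zero \<in> tower_ideal"
  by (simp add: tower_ideal_def add_closure.zero)

lemma tower_ideal_add: "a \<in> tower_ideal \<Longrightarrow> c \<in> tower_ideal \<Longrightarrow> cp_add a c \<in> tower_ideal"
  unfolding tower_ideal_def by (rule add_closure_add)

lemma tower_ideal_induct [consumes 1, case_names zero step]:
  assumes "a \<in> tower_ideal" "Q cp_zero"
    and "\<And>a W b. a \<in> tower_ideal \<Longrightarrow> Q a \<Longrightarrow> W \<in> V \<Longrightarrow> b \<in> B \<Longrightarrow> Q (cp_add a (cp_mult T (hproj W) b))"
  shows "Q a"
  using assms(1) unfolding tower_ideal_def
proof (induction rule: add_closure.induct)
  case zero
  then show ?case
    by (rule assms(2))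
next
  case (step a s)
  then obtain W b where "W \<in> V" "b \<in> B" "s = cp_mult T (hproj W) b"
    by blast
  then show ?case
    using assms(3) [of a W b] step by (simp add: tower_ideal_def)
qed

lemma tower_ideal_subset_B: "tower_ideal \<subseteq> B"
  unfolding tower_ideal_def
  by (rule add_closure_least) (auto simp: hproj_mult_in_B subalgB_zero subalgB.add)

lemma tower_ideal_uminus: "a \<in> tower_ideal \<Longrightarrow> cp_smult (- 1) a \<in> tower_ideal"
proof (induction rule: tower_ideal_induct)
  case zero
  then show ?case
    using tower_ideal_zero by (simp add: cp_smult_def cp_zero_def)
next
  case (step a W b)
  have "cp_smult (- 1) (cp_add a (cp_mult T (hproj W) b)) =
      cp_add (cp_smult (- 1) a) (cp_mult T (hproj W) (cp_smult (- 1) b))"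
    unfolding cp_mult_smult_right by (simp add: cp_smult_def cp_add_def fun_eq_iff)
  moreover have "cp_mult T (hproj W) (cp_smult (- 1) b) \<in> tower_ideal"
    using step by (intro hproj_mult_in_tower_ideal subalgB.smult)
  ultimately show ?case
    using step.IH by (simp add: tower_ideal_add)
qed

lemma tower_ideal_mult_left:
  assumes r: "r \<in> B"
  shows "a \<in> tower_ideal \<Longrightarrow> cp_mult T r a \<in> tower_ideal"
proof (induction rule: tower_ideal_induct)
  case zero
  then show ?case
    by (simp add: cp_mult_zero_right tower_ideal_zero)
next
  case (step a W b)
  have "cp_mult T r (cp_add a (cp_mult T (hproj W) b)) =
      cp_add (cp_mult T r a) (cp_mult T (hproj W) (cp_mult T r b))"
    by (simp only: cp_mult_add_right hproj_mult_left_assoc [OF \<open>W \<in> V\<close> r])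
  moreover have "cp_mult T (hproj W) (cp_mult T r b) \<in> tower_ideal"
    using step r by (intro hproj_mult_in_tower_ideal subalgB.mult)
  ultimately show ?case
    using step.IH by (simp add: tower_ideal_add)
qed

lemma tower_ideal_mult_right:
  assumes r: "r \<in> B"
  shows "a \<in> tower_ideal \<Longrightarrow> cp_mult T a r \<in> tower_ideal"
proof (induction rule: tower_ideal_induct)
  case zero
  then show ?case
    by (simp add: cp_mult_zero_left tower_ideal_zero)
next
  case (step a W b)
  have "a \<in> B" "cp_mult T (hproj W) b \<in> B"
    using step tower_ideal_subset_B hproj_mult_in_B by auto
  then have "cp_mult T (cp_add a (cp_mult T (hproj W) b)) r =
      cp_add (cp_mult T a r) (cp_mult T (hproj W) (cp_mult T b r))"
    by (simp only: cp_mult_add_left subalgB_finite_supp hproj_mult_right_assoc [OF \<open>W \<in> V\<close> \<open>b \<in> B\<close>])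
  moreover have "cp_mult T (hproj W) (cp_mult T b r) \<in> tower_ideal"
    using step r by (intro hproj_mult_in_tower_ideal subalgB.mult)
  ultimately show ?case
    using step.IH by (simp add: tower_ideal_add)
qed

lemma two_sided_ideal_tower_ideal: "two_sided_ideal T B tower_ideal"
proof -
  have "add_subgroup tower_ideal"
    unfolding add_subgroup_def using tower_ideal_zero tower_ideal_add tower_ideal_uminus by blast
  then show ?thesis
    unfolding two_sided_ideal_def left_ideal_def right_ideal_def
    using tower_ideal_subset_B tower_ideal_mult_left tower_ideal_mult_right by blast
qed

section \<open>Minimal right ideals and the socle\<close>

lemma matrix_unit_diag_mult:
  "cp_mult T (matrix_unit W l l) b n x = indicator ((T ^^ l) ` W) x * b n x"
  by (simp add: matrix_unit_def cp_mult_monom_left)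

lemma matrix_unit_diag_mult_in_B:
  "W \<in> V \<Longrightarrow> l < height W \<Longrightarrow> b \<in> B \<Longrightarrow> cp_mult T (matrix_unit W l l) b \<in> B"
  using matrix_unit_in_B by (simp add: subalgB.mult)

lemma row_times_matrix_unit:
  assumes W: "W \<in> V" and b: "b \<in> B" and l: "l < height W" and m: "m < height W" and w: "w \<in> W"
  shows "cp_mult T (cp_mult T (matrix_unit W l l) b) (matrix_unit W m l) =
    cp_smult (b (int l - int m) ((T ^^ l) w)) (matrix_unit W l l)"
proof (intro ext)
  fix n y
  let ?a = "cp_mult T (matrix_unit W l l) b"
  let ?p = "n - (int m - int l)"
  have "finite (cp_supp ?a)"
    using matrix_unit_diag_mult_in_B [OF W l b] by (rule subalgB_finite_supp)
  then have "cp_mult T ?a (matrix_unit W m l) n y = ?a ?p y * indicator ((T ^^ m) ` W) (tpow T (- ?p) y)"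
    unfolding matrix_unit_def [of W m l] by (simp add: cp_mult_monom_right)
  then have lhs: "cp_mult T ?a (matrix_unit W m l) n y =
      indicator ((T ^^ l) ` W) y * b ?p y * indicator ((T ^^ m) ` W) (tpow T (- ?p) y)"
    by (simp add: matrix_unit_diag_mult)
  show "cp_mult T ?a (matrix_unit W m l) n y = cp_smult (b (int l - int m) ((T ^^ l) w)) (matrix_unit W l l) n y"
  proof (cases "y \<in> (T ^^ l) ` W")
    case False
    then show ?thesis
      using lhs by (simp add: cp_smult_def matrix_unit_def cp_monom_def)
  next
    case True
    then obtain w1 where w1: "w1 \<in> W" "y = (T ^^ l) w1"
      by blast
    show ?thesis
    proof (cases "n = 0")
      case True
      have "tpow T (- ?p) y = (T ^^ m) w1"
        using tpow_funpow [OF bij, of "int m - int l" l w1] w1(2) True by simp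
      moreover have "b (int l - int m) y = b (int l - int m) ((T ^^ l) w)"
        using subalgB_level_constant [OF Vsets_is_tower [OF W] b] l m w w1
        unfolding level_constant_def by blast
      ultimately show ?thesis
        using lhs True w1 by (simp add: cp_smult_def matrix_unit_def cp_monom_def)
    next
      case False
      then have "b ?p y * indicator ((T ^^ m) ` W) (tpow T (- ?p) y) = 0"
        using subalgB_coeff_between_levels [OF Vsets_is_tower [OF W] b w1(1) l m, of ?p] w1(2)
        by (auto simp: indicator_def)
      then show ?thesis
        using lhs False by (simp add: cp_smult_def matrix_unit_def cp_monom_def)
    qed
  qed
qed

definition row_ideal :: "'x set \<Rightarrow> nat \<Rightarrow> ('x, 'k) cp set" where
  "row_ideal W l = {cp_mult T (matrix_unit W l l) b | b. b \<in> B}"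

lemma matrix_unit_in_row_ideal:
  "W \<in> V \<Longrightarrow> l < height W \<Longrightarrow> matrix_unit W l l \<in> row_ideal W l"
proof -
  have "cp_mult T (matrix_unit W l l) cp_one = matrix_unit W l l"
    by (simp add: matrix_unit_def cp_one_eq_monom cp_mult_monom)
  then show ?thesis
    unfolding row_ideal_def using subalgB.one by force
qed

lemma row_ideal_generated:
  assumes W: "W \<in> V" and l: "l < height W" and a: "a \<in> row_ideal W l" "a \<noteq> cp_zero"
  obtains r where "r \<in> B" "cp_mult T a r = matrix_unit W l l"
proof -
  obtain b where b: "b \<in> B" "a = cp_mult T (matrix_unit W l l) b"
    using a(1) unfolding row_ideal_def by blast
  obtain n x where "a n x \<noteq> 0"
    using a(2) by (auto simp: cp_zero_def fun_eq_iff)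
  then have "x \<in> (T ^^ l) ` W" and c: "b n x \<noteq> 0"
    using b(2) matrix_unit_diag_mult by (auto simp: indicator_def split: if_splits)
  then obtain w where w: "w \<in> W" "x = (T ^^ l) w"
    by blast
  have r: "0 \<le> int l - n \<and> int l - n < int (height W)"
    using subalgB_coeff_level(1) [OF Vsets_is_tower [OF W] b(1) w(1) l] c w(2) by simp
  define m where "m = nat (int l - n)"
  have m: "n = int l - int m" "m < height W"
    using r by (auto simp: m_def)
  let ?r = "cp_smult (inverse (b n x)) (matrix_unit W m l)"
  have "?r \<in> B"
    using matrix_unit_in_B [OF W m(2) l] by (rule subalgB.smult)
  have "cp_mult T a ?r = cp_smult (inverse (b n x)) (cp_smult (b n x) (matrix_unit W l l))"
    using row_times_matrix_unit [OF W b(1) l m(2) w(1)] b(2) w(2) m(1) by (simp add: cp_mult_smult_right)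
  also have "\<dots> = matrix_unit W l l"
    using c by (simp add: cp_smult_def mult.assoc [symmetric])
  finally show ?thesis
    using that \<open>?r \<in> B\<close> by blast
qed

lemma right_ideal_monom_zero_mult:
  assumes "cp_monom f 0 \<in> B"
  shows "right_ideal T B {cp_mult T (cp_monom f 0) b | b. b \<in> B}" (is "right_ideal T B ?R")
proof -
  have "?R \<subseteq> B"
    using assms by (auto intro: subalgB.mult)
  moreover have "cp_zero = cp_mult T (cp_monom f 0) cp_zero"
    by (simp add: cp_mult_zero_right)
  then have "cp_zero \<in> ?R"
    using subalgB_zero by blast
  moreover have "cp_add a c \<in> ?R" if "a \<in> ?R" "c \<in> ?R" for a c
    using that by (auto simp: cp_mult_add_right [symmetric] intro: subalgB.add)
  moreover have "cp_smult (- 1) a \<in> ?R" if "a \<in> ?R" for a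
    using that by (auto simp: cp_mult_smult_right [symmetric] intro: subalgB.smult)
  moreover have "cp_mult T a r \<in> ?R" if "a \<in> ?R" "r \<in> B" for a r
    using that cp_mult_monom_zero_assoc [OF subalgB_finite_supp] by (auto intro: subalgB.mult)
  ultimately show ?thesis
    unfolding right_ideal_def add_subgroup_def by blast
qed

lemma minimal_right_ideal_row_ideal:
  assumes W: "W \<in> V" and l: "l < height W"
  shows "minimal_right_ideal T B (row_ideal W l)"
proof -
  have "right_ideal T B (row_ideal W l)"
    using right_ideal_monom_zero_mult matrix_unit_in_B [OF W l l]
    unfolding row_ideal_def matrix_unit_def by simp
  moreover obtain w where "w \<in> W"
    using Vsets_is_tower [OF W] by (auto simp: is_tower_def)
  then have "matrix_unit W l l 0 ((T ^^ l) w) = 1"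
    by (simp add: matrix_unit_def cp_monom_def)
  then have "row_ideal W l \<noteq> {cp_zero}"
    using matrix_unit_in_row_ideal [OF W l] by (auto simp: cp_zero_def)
  moreover have "J = {cp_zero} \<or> J = row_ideal W l"
    if J: "right_ideal T B J" "J \<subseteq> row_ideal W l" for J
  proof (cases "J = {cp_zero}")
    case False
    moreover have "cp_zero \<in> J"
      using J(1) by (simp add: right_ideal_def add_subgroup_def)
    ultimately obtain a where "a \<in> J" "a \<noteq> cp_zero"
      by blast
    then obtain r where "r \<in> B" "cp_mult T a r = matrix_unit W l l"
      using row_ideal_generated [OF W l] J(2) by blast
    then have "matrix_unit W l l \<in> J"
      using J(1) \<open>a \<in> J\<close> unfolding right_ideal_def by metis
    then have "row_ideal W l \<subseteq> J"
      using J(1) unfolding row_ideal_def right_ideal_def by blast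
    then show ?thesis
      using J(2) by blast
  qed simp
  ultimately show ?thesis
    unfolding minimal_right_ideal_def by blast
qed

lemma hproj_mult_eq_sum_rows:
  assumes W: "W \<in> V"
  shows "cp_mult T (hproj W) b = (\<lambda>n x. \<Sum>l<height W. cp_mult T (matrix_unit W l l) b n x)"
proof (intro ext)
  fix n x
  have "disjoint_family_on (\<lambda>l. (T ^^ l) ` W) {..<height W}"
    using tower_levels_disjoint [OF W] by (auto simp: disjoint_family_on_def)
  then have "(\<Sum>l<height W. cp_mult T (matrix_unit W l l) b n x) = indicator (tower_of W) x * b n x"
    by (simp add: matrix_unit_diag_mult sum_distrib_right [symmetric] indicator_UN_disjoint tower_def)
  then show "cp_mult T (hproj W) b n x = (\<Sum>l<height W. cp_mult T (matrix_unit W l l) b n x)"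
    by (simp add: hproj_mult [OF W])
qed

lemma socle_add: "a \<in> socle T B \<Longrightarrow> c \<in> socle T B \<Longrightarrow> cp_add a c \<in> socle T B"
  unfolding socle_def by (rule add_closure_add)

lemma tower_ideal_subset_socle: "tower_ideal \<subseteq> socle T B"
  unfolding tower_ideal_def
proof (rule add_closure_least)
  show "(\<Union>W\<in>V. {cp_mult T (hproj W) b | b. b \<in> B}) \<subseteq> socle T B"
  proof clarify
    fix W b
    assume W: "W \<in> V" and b: "b \<in> B"
    have "cp_mult T (matrix_unit W l l) b \<in> \<Union>{I. minimal_left_ideal T B I \<or> minimal_right_ideal T B I}"
      if "l < height W" for l
      using minimal_right_ideal_row_ideal [OF W that] b unfolding row_ideal_def by blast
    then show "cp_mult T (hproj W) b \<in> socle T B"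
      unfolding hproj_mult_eq_sum_rows [OF W] socle_def by (rule add_closure_sum)
  qed
  show "cp_zero \<in> socle T B"
    by (simp add: socle_def add_closure.zero)
qed (rule socle_add)

lemma tower_ideal_direct:
  assumes F: "finite F" "F \<subseteq> V" and c: "\<forall>W\<in>F. c W \<in> {cp_mult T (hproj W) b | b. b \<in> B}"
    and sum: "(\<lambda>n x. \<Sum>W\<in>F. c W n x) = cp_zero"
  shows "\<forall>W\<in>F. c W = cp_zero"
proof (intro ballI ext)
  fix W0 n x
  assume W0: "W0 \<in> F"
  have vanish: "c W n x = 0" if W: "W \<in> F" and out: "x \<notin> tower_of W" for W
  proof -
    obtain b where "c W = cp_mult T (hproj W) b"
      using bspec [OF c W] by auto
    moreover have "W \<in> V"
      using F(2) W by blast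
    ultimately show ?thesis
      using hproj_mult [of W b n x] out by simp
  qed
  show "c W0 n x = cp_zero n x"
  proof (cases "x \<in> tower_of W0")
    case True
    then have "c W n x = 0" if "W \<in> F - {W0}" for W
      using vanish Vsets_towers_disjoint [of W W0 x] that F(2) W0 by blast
    then have "c W0 n x = (\<Sum>W\<in>F. c W n x)"
      using sum.remove [OF F(1) W0, of "\<lambda>W. c W n x"] by simp
    also have "\<dots> = 0"
      using fun_cong [OF fun_cong [OF sum, of n], of x] by (simp add: cp_zero_def)
    finally show ?thesis
      by (simp add: cp_zero_def)
  qed (simp add: vanish W0 cp_zero_def)
qed

definition chi_products :: "'x set \<Rightarrow> ('x, 'k) cp set" where
  "chi_products W = {cp_mult T (cp_mult T b (cp_chi W)) b' | b b'. b \<in> B \<and> b' \<in> B}"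

lemma chi_products_subset_tower_ideal:
  assumes W: "W \<in> V"
  shows "chi_products W \<subseteq> tower_ideal"
proof
  fix z
  assume "z \<in> chi_products W"
  then obtain b b' where b: "b \<in> B" "b' \<in> B" and z: "z = cp_mult T (cp_mult T b (cp_chi W)) b'"
    unfolding chi_products_def by blast
  have "cp_chi W \<in> B"
    using indicator_Vsets_in_B [OF W] by (simp add: cp_chi_eq_monom)
  then have "z \<in> B"
    using b z by (simp add: subalgB.mult)
  have "0 < height W"
    using Vsets_is_tower [OF W] by (simp add: is_tower_def)
  then have "W \<subseteq> tower_of W"
    unfolding tower_def by (intro subsetI UN_I [of 0]) auto
  have "x \<in> tower_of W" if "z n x \<noteq> 0" for n x
  proof -
    have "cp_mult T (cp_mult T b (cp_chi W)) b' n x \<noteq> 0"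
      using that z by simp
    then obtain i where "cp_mult T b (cp_chi W) i x \<noteq> 0"
      by (rule cp_mult_nonzero_term)
    then have "b i x \<noteq> 0" "tpow T (- i) x \<in> W"
      using subalgB_finite_supp [OF b(1)]
      by (auto simp: cp_chi_eq_monom cp_mult_monom_right indicator_def split: if_splits)
    then show ?thesis
      using subalgB_tower_iff [OF Vsets_is_tower [OF W] b(1)] \<open>W \<subseteq> tower_of W\<close> by blast
  qed
  then have "cp_mult T (hproj W) z = z"
    by (auto simp: hproj_mult [OF W] indicator_def fun_eq_iff)
  then show "z \<in> tower_ideal"
    using hproj_mult_in_tower_ideal [OF W \<open>z \<in> B\<close>] by simp
qed

lemma row_in_chi_products:
  assumes W: "W \<in> V" and l: "l < height W" and b: "b \<in> B"
  shows "cp_mult T (matrix_unit W l l) b \<in> chi_products W"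
proof -
  have "(T ^^ l) ` W \<inter> tpow T (- int l) -` W = (T ^^ l) ` W"
    by (auto simp: tpow_minus_funpow)
  then have e_chi: "cp_mult T (matrix_unit W l 0) (cp_chi W) = matrix_unit W l 0"
    by (simp add: matrix_unit_def cp_chi_eq_monom cp_mult_indicator)
  have "cp_mult T (matrix_unit W l 0) (cp_mult T (matrix_unit W 0 l) b) = cp_mult T (matrix_unit W l l) b"
  proof (intro ext)
    fix n x
    have "indicator ((T ^^ l) ` W) x * indicator W (tpow T (- int l) x) = (indicator ((T ^^ l) ` W) x :: 'k)"
      by (auto simp: indicator_def tpow_minus_funpow)
    then show "cp_mult T (matrix_unit W l 0) (cp_mult T (matrix_unit W 0 l) b) n x =
        cp_mult T (matrix_unit W l l) b n x"
      by (simp add: matrix_unit_def cp_mult_monom_left tpow_tpow mult.assoc [symmetric])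
  qed
  then have "cp_mult T (matrix_unit W l l) b =
      cp_mult T (cp_mult T (matrix_unit W l 0) (cp_chi W)) (cp_mult T (matrix_unit W 0 l) b)"
    by (simp only: e_chi)
  moreover have "matrix_unit W l 0 \<in> B" "cp_mult T (matrix_unit W 0 l) b \<in> B"
    using matrix_unit_in_B [OF W] l b by (auto intro: subalgB.mult)
  ultimately show ?thesis
    unfolding chi_products_def by blast
qed

lemma span_chi_products_eq_tower_ideal:
  "add_closure (\<Union>W\<in>V. add_closure (chi_products W)) = tower_ideal"
proof
  show "add_closure (\<Union>W\<in>V. add_closure (chi_products W)) \<subseteq> tower_ideal"
  proof (rule add_closure_least)
    show "(\<Union>W\<in>V. add_closure (chi_products W)) \<subseteq> tower_ideal"
    proof (rule UN_least)
      fix W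
      assume "W \<in> V"
      then show "add_closure (chi_products W) \<subseteq> tower_ideal"
        by (rule add_closure_least [OF chi_products_subset_tower_ideal tower_ideal_zero tower_ideal_add])
    qed
  qed (simp_all add: tower_ideal_zero tower_ideal_add)
  show "tower_ideal \<subseteq> add_closure (\<Union>W\<in>V. add_closure (chi_products W))"
    unfolding tower_ideal_def
  proof (rule add_closure_least)
    show "(\<Union>W\<in>V. {cp_mult T (hproj W) b | b. b \<in> B}) \<subseteq> add_closure (\<Union>W\<in>V. add_closure (chi_products W))"
    proof clarify
      fix W b
      assume W: "W \<in> V" and b: "b \<in> B"
      have "cp_mult T (matrix_unit W l l) b \<in> (\<Union>W\<in>V. add_closure (chi_products W))" if "l < height W" for l
        using row_in_chi_products [OF W that b] W add_closure_base by blast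
      then show "cp_mult T (hproj W) b \<in> add_closure (\<Union>W\<in>V. add_closure (chi_products W))"
        unfolding hproj_mult_eq_sum_rows [OF W] by (rule add_closure_sum)
    qed
  qed (simp_all add: add_closure.zero add_closure_add)
qed

section \<open>Density of the towers\<close>

lemma towers_dense:
  assumes sets: "sets \<mu> = sets borel" and prob: "prob_space \<mu>" and full: "full_measure \<mu>"
    and inv: "invariant_measure T \<mu>" and erg: "ergodic_measure T \<mu>" and "E \<noteq> {}"
    and U: "open U" "U \<noteq> {}"
  shows "\<exists>W\<in>V. U \<inter> tower_of W \<noteq> {}"
proof -
  have E: "open E" "measure \<mu> E > 0"
    using clopen_E full \<open>E \<noteq> {}\<close> by (auto simp: clopen_set_def full_measure_def)
  have forward: "{x. \<forall>b. (T ^^ Suc b) x \<notin> E} \<in> null_sets \<mu>"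
    using never_returning_null [OF bij continuous continuous_inv sets prob inv erg E] .
  have backward: "{x. \<forall>b. (inv T ^^ Suc b) x \<notin> E} \<in> null_sets \<mu>"
    using never_returning_null [OF bij_imp_bij_inv [OF bij] continuous_inv _ sets prob
        invariant_measure_inv [OF bij continuous_inv sets inv] ergodic_measure_inv [OF bij erg] E]
      continuous inv_inv_eq [OF bij] by simp
  have "measure \<mu> U > 0"
    using full U by (simp add: full_measure_def)
  moreover have "U \<in> sets \<mu>"
    using U(1) sets by simp
  ultimately have "\<not> U \<subseteq> {x. \<forall>b. (T ^^ Suc b) x \<notin> E} \<union> {x. \<forall>b. (inv T ^^ Suc b) x \<notin> E}"
    using null_sets_subset [OF null_sets.Un [OF forward backward]] measure_eq_0_null_sets by fastforce
  then obtain x b b' where "x \<in> U" "(T ^^ Suc b) x \<in> E" "(inv T ^^ Suc b') x \<in> E"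
    by blast
  then obtain W where "W \<in> V" "x \<in> tower_of W"
    using Vsets_cover by blast
  then show ?thesis
    using \<open>x \<in> U\<close> by blast
qed

end

locale dense_towers = partition_subalgebra T \<sigma> E P
  for T :: "'x::topological_space \<Rightarrow> 'x" and \<sigma> :: "'k::field \<Rightarrow> 'k" and E P +
  assumes dense: "\<And>U. open U \<Longrightarrow> U \<noteq> {} \<Longrightarrow> \<exists>W\<in>Vsets T E P. U \<inter> tower W (Wlen T E P W) \<noteq> {}"
begin

text \<open>The coefficients of elements of \<open>B\<close> are locally constant, so they are determined by their
  values on the dense union of the towers.\<close>

lemma subalgB_eqI_hproj:
  assumes b: "b \<in> B" and b': "b' \<in> B" and eq: "\<forall>W\<in>V. cp_mult T (hproj W) b = cp_mult T (hproj W) b'"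
  shows "b = b'"
proof (intro ext)
  fix n x0
  obtain U where U: "open U" "x0 \<in> U" "\<forall>y\<in>U. b n y = b n x0"
    using subalgB_carrier [OF b] unfolding cp_carrier_iff locally_constant_def by blast
  obtain U' where U': "open U'" "x0 \<in> U'" "\<forall>y\<in>U'. b' n y = b' n x0"
    using subalgB_carrier [OF b'] unfolding cp_carrier_iff locally_constant_def by blast
  obtain W y where W: "W \<in> V" and y: "y \<in> U" "y \<in> U'" "y \<in> tower_of W"
    using dense [of "U \<inter> U'"] U U' by blast
  have "cp_mult T (hproj W) b n y = cp_mult T (hproj W) b' n y"
    using eq W by simp
  then have "b n y = b' n y"
    using hproj_mult [OF W] y(3) by simp
  then show "b n x0 = b' n x0"
    using U(3) U'(3) y(1,2) by simp
qed

lemma hproj_mult_nonzero: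
  assumes "a \<in> B" "a \<noteq> cp_zero"
  obtains W where "W \<in> V" "cp_mult T (hproj W) a \<noteq> cp_zero"
  using subalgB_eqI_hproj [OF assms(1) subalgB_zero] assms(2) by (auto simp: cp_mult_zero_right)

lemma essential_ideal_tower_ideal: "essential_ideal T B tower_ideal"
  unfolding essential_ideal_def
proof (intro conjI allI impI)
  show "two_sided_ideal T B tower_ideal"
    by (rule two_sided_ideal_tower_ideal)
  fix J
  assume J: "two_sided_ideal T B J \<and> J \<noteq> {cp_zero}"
  then have "cp_zero \<in> J"
    by (simp add: two_sided_ideal_def left_ideal_def add_subgroup_def)
  then obtain a where a: "a \<in> J" "a \<noteq> cp_zero"
    using J by blast
  then have "a \<in> B"
    using J by (auto simp: two_sided_ideal_def left_ideal_def)
  then obtain W where W: "W \<in> V" "cp_mult T (hproj W) a \<noteq> cp_zero"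
    using hproj_mult_nonzero a(2) by blast
  have "cp_mult T (hproj W) a \<in> J"
    using J a(1) hW_in_B [OF W(1)] by (auto simp: two_sided_ideal_def left_ideal_def)
  moreover have "cp_mult T (hproj W) a \<in> tower_ideal"
    using hproj_mult_in_tower_ideal [OF W(1) \<open>a \<in> B\<close>] .
  ultimately show "tower_ideal \<inter> J \<noteq> {cp_zero}"
    using W(2) by blast
qed

text \<open>A minimal one-sided ideal \<open>L\<close> meets \<open>tower_ideal\<close> nontrivially (multiply a nonzero element by a
  suitable central \<open>h\<^sub>W\<close>), so by minimality it is contained in it.\<close>

lemma minimal_left_ideal_subset_tower_ideal:
  assumes L: "minimal_left_ideal T B L"
  shows "L \<subseteq> tower_ideal"
proof -
  have LI: "left_ideal T B L" and "L \<noteq> {cp_zero}"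
    using L by (auto simp: minimal_left_ideal_def)
  moreover have "cp_zero \<in> L"
    using LI by (simp add: left_ideal_def add_subgroup_def)
  ultimately obtain a where a: "a \<in> L" "a \<noteq> cp_zero"
    by blast
  then have "a \<in> B"
    using LI by (auto simp: left_ideal_def)
  then obtain W where W: "W \<in> V" "cp_mult T (hproj W) a \<noteq> cp_zero"
    using hproj_mult_nonzero a(2) by blast
  have "cp_mult T (hproj W) a \<in> L \<inter> tower_ideal"
    using LI a(1) hW_in_B [OF W(1)] hproj_mult_in_tower_ideal [OF W(1) \<open>a \<in> B\<close>]
    by (auto simp: left_ideal_def)
  then have "L \<inter> tower_ideal \<noteq> {cp_zero}"
    using W(2) by blast
  moreover have "left_ideal T B (L \<inter> tower_ideal)"
    using LI two_sided_ideal_tower_ideal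
    unfolding left_ideal_def two_sided_ideal_def add_subgroup_def by blast
  ultimately have "L \<inter> tower_ideal = L"
    using L unfolding minimal_left_ideal_def by blast
  then show ?thesis
    by blast
qed

lemma minimal_right_ideal_subset_tower_ideal:
  assumes R: "minimal_right_ideal T B R"
  shows "R \<subseteq> tower_ideal"
proof -
  have RI: "right_ideal T B R" and "R \<noteq> {cp_zero}"
    using R by (auto simp: minimal_right_ideal_def)
  moreover have "cp_zero \<in> R"
    using RI by (simp add: right_ideal_def add_subgroup_def)
  ultimately obtain a where a: "a \<in> R" "a \<noteq> cp_zero"
    by blast
  then have "a \<in> B"
    using RI by (auto simp: right_ideal_def)
  then obtain W where W: "W \<in> V" "cp_mult T (hproj W) a \<noteq> cp_zero"
    using hproj_mult_nonzero a(2) by blast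
  have "cp_mult T a (hproj W) \<in> R"
    using RI a(1) hW_in_B [OF W(1)] by (auto simp: right_ideal_def)
  then have "cp_mult T (hproj W) a \<in> R \<inter> tower_ideal"
    using hproj_commute [OF W(1) \<open>a \<in> B\<close>] hproj_mult_in_tower_ideal [OF W(1) \<open>a \<in> B\<close>] by simp
  then have "R \<inter> tower_ideal \<noteq> {cp_zero}"
    using W(2) by blast
  moreover have "right_ideal T B (R \<inter> tower_ideal)"
    using RI two_sided_ideal_tower_ideal
    unfolding right_ideal_def two_sided_ideal_def add_subgroup_def by blast
  ultimately have "R \<inter> tower_ideal = R"
    using R unfolding minimal_right_ideal_def by blast
  then show ?thesis
    by blast
qed

lemma socle_eq_tower_ideal: "socle T B = tower_ideal"
proof
  show "socle T B \<subseteq> tower_ideal"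
    unfolding socle_def
    using minimal_left_ideal_subset_tower_ideal minimal_right_ideal_subset_tower_ideal
    by (intro add_closure_least) (auto simp: tower_ideal_zero tower_ideal_add)
qed (rule tower_ideal_subset_socle)

end

theorem proposition3p12:
  fixes T :: "'x::metric_space \<Rightarrow> 'x"
    and \<mu> :: "'x measure"
    and \<sigma> :: "'k::field \<Rightarrow> 'k"
    and E :: "'x set" and P :: "'x set set"
  assumes "infinite (UNIV :: 'x set)"
    and "totally_disconnected_space TYPE('x)"
    and "compact (UNIV :: 'x set)"
    and "is_homeo T"
    and "sets \<mu> = sets borel" and "prob_space \<mu>"
    and "full_measure \<mu>" and "invariant_measure T \<mu>" and "ergodic_measure T \<mu>"
    and "field_involution \<sigma>"
    and "clopen_set E" and "E \<noteq> {}"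
    and "is_partition P (UNIV - E)"
  defines "B \<equiv> subalgB \<sigma> T P"
    and "V \<equiv> Vsets T E P"
    and "h \<equiv> hW T E P"
  shows
    \<comment> \<open>\<pi>(b) = (h_W b)_W is injective on B \<close>
    "(\<forall>b\<in>B. \<forall>b'\<in>B. (\<forall>W\<in>V. cp_mult T (h W) b = cp_mult T (h W) b') \<longrightarrow> b = b')
     \<and> essential_ideal T B (add_closure (\<Union>W\<in>V. {cp_mult T (h W) b | b. b \<in> B}))
     \<and> socle T B = add_closure (\<Union>W\<in>V. {cp_mult T (h W) b | b. b \<in> B})
     \<and> socle T B = add_closure (\<Union>W\<in>V.
          add_closure {cp_mult T (cp_mult T b (cp_chi W)) b' | b b'. b \<in> B \<and> b' \<in> B})
     \<comment> \<open>the sum is direct\<close>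
     \<and> (\<forall>F c. finite F \<and> F \<subseteq> V \<and> (\<forall>W\<in>F. c W \<in> {cp_mult T (h W) b | b. b \<in> B}) \<and>
          (\<lambda>n x. \<Sum>W\<in>F. c W n x) = cp_zero \<longrightarrow> (\<forall>W\<in>F. c W = cp_zero))"
proof -
  interpret partition_subalgebra T \<sigma> E P
    using assms(4,10,11,13) by unfold_locales (auto simp: is_homeo_def)
  interpret dense_towers T \<sigma> E P
    using towers_dense [OF assms(5-9,12)] by unfold_locales
  show ?thesis
    using subalgB_eqI_hproj essential_ideal_tower_ideal socle_eq_tower_ideal
      span_chi_products_eq_tower_ideal tower_ideal_direct
    unfolding B_def V_def h_def tower_ideal_def chi_products_def by blast
qed

end
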